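(* Let $L$ and $f$ be as in the context, and assume that $f$ satisfies (F-1) and (F-2). Then there exists a continuous function $M(x,t)$ on $\mathbb{R}^n\times(0,\infty)$ such that for every $g\in C(\mathbb{R}^n)$ with $g\ge 0$ and every classical solution $u$ of the Cauchy problem (1.1) with initial data $g$, one has $u(x,t)\le M(x,t)$ for all $x\in\mathbb{R}^n$ and all $t>0$.
   Context: Let $L=\sum_{i,j=1}^n a_{ij}(x)\frac{\partial^2}{\partial x_i\partial x_j}+\sum_{i=1}^n b_i(x)\frac{\partial}{\partial x_i}$ with $a_{ij},b_i\in C^{\alpha}(\mathbb{R}^n)$ and $\sum_{i,j}a_{ij}(x)\nu_i\nu_j>0$ for all $x\in\mathbb{R}^n$, $\nu\in\mathbb{R}^n\setminus\{0\}$. Let $f:\mathbb{R}^n\times[0,\infty)\to\mathbb{R}$ be locally Lipschitz in $x$ and in $u$. The Cauchy problem (1.1) with initial data $g\in C(\mathbb{R}^n)$, $g\ge0$, is: $u_t=Lu+f(x,u)$ in $\mathbb{R}^n\times(0,\infty)$, $u(x,0)=g(x)$, $u\ge0$; a (classical) solution is $u\in C^{2,1}(\mathbb{R}^n\times(0,\infty))\cap C(\mathbb{R}^n\times[0,\infty))$ satisfying these. For $R>0$ let $F_R(u)=\sup_{|x|\le R}f(x,u)$. Condition (F-1): $\sup_{u>0}F_R(u)<\infty$ for all $R>0$. Let $\log^{(i)}$ denote the $i$-th iterate of $\log$ ($\log^{(1)}=\log$, $\log^{(2)}=\log\log$, etc.), with $\prod_{i=1}^0\log^{(i)}u=1$.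 Condition (F-2): for each $R>0$ there exist an integer $m\ge0$ and $\epsilon>0$ such that $\lim_{u\to\infty}\frac{F_R(u)}{u\left(\prod_{i=1}^m\log^{(i)}u\right)^2(\log^{(m+1)}u)^{2+\epsilon}}=-\infty$. *)

theory Defs
  imports "HOL-Analysis.Analysis"
begin

definition loc_hoelder :: "real \<Rightarrow> (real^'n \<Rightarrow> real) \<Rightarrow> bool" where
  "loc_hoelder \<alpha> h \<longleftrightarrow>
     (\<forall>R>0. \<exists>C. \<forall>x\<in>cball 0 R. \<forall>y\<in>cball 0 R. \<bar>h x - h y\<bar> \<le> C * dist x y powr \<alpha>)"

definition loc_lipschitz_xu :: "(real^'n \<Rightarrow> real \<Rightarrow> real) \<Rightarrow> bool" where
  "loc_lipschitz_xu f \<longleftrightarrow>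
     (\<forall>R>0. \<exists>C. \<forall>x\<in>cball 0 R. \<forall>y\<in>cball 0 R. \<forall>u\<in>{0..R}. \<forall>v\<in>{0..R}.
        \<bar>f x u - f y v\<bar> \<le> C * (dist x y + \<bar>u - v\<bar>))"

definition elliptic_pointwise :: "('n \<Rightarrow> 'n \<Rightarrow> real^'n \<Rightarrow> real) \<Rightarrow> bool" where
  "elliptic_pointwise a \<longleftrightarrow>
     (\<forall>x. \<forall>\<nu>::real^'n. \<nu> \<noteq> 0 \<longrightarrow> (\<Sum>i\<in>UNIV. \<Sum>j\<in>UNIV. a i j x * \<nu>$i * \<nu>$j) > 0)"

definition F_sup :: "(real^'n \<Rightarrow> real \<Rightarrow> real) \<Rightarrow> real \<Rightarrow> real \<Rightarrow> real" where
  "F_sup f R u = (SUP x\<in>cball 0 R. f x u)"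

definition iterlog :: "nat \<Rightarrow> real \<Rightarrow> real" where
  "iterlog i = ln ^^ i"

definition cond_F1 :: "(real^'n \<Rightarrow> real \<Rightarrow> real) \<Rightarrow> bool" where
  "cond_F1 f \<longleftrightarrow> (\<forall>R>0. bdd_above ((\<lambda>u. F_sup f R u) ` {0<..}))"

definition cond_F2 :: "(real^'n \<Rightarrow> real \<Rightarrow> real) \<Rightarrow> bool" where
  "cond_F2 f \<longleftrightarrow> (\<forall>R>0. \<exists>m::nat. \<exists>\<epsilon>>0.
     filterlim (\<lambda>u. F_sup f R u /
        (u * (\<Prod>i=1..m. iterlog i u)^2 * (iterlog (m+1) u) powr (2 + \<epsilon>))) at_bot at_top)"

text \<open>Classical solution u in C^{2,1}(R^n x (0,inf)) \<inter> C(R^n x [0,inf)) of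
  u_t = L u + f(x,u), u(x,0) = g x, u >= 0.
  Du i = partial derivative in x_i, D2u i j = d/dx_i (d/dx_j u), Dt = d/dt.\<close>
definition classical_solution ::
  "('n \<Rightarrow> 'n \<Rightarrow> real^'n \<Rightarrow> real) \<Rightarrow> ('n \<Rightarrow> real^'n \<Rightarrow> real) \<Rightarrow>
   (real^'n \<Rightarrow> real \<Rightarrow> real) \<Rightarrow> (real^'n \<Rightarrow> real) \<Rightarrow> (real^'n \<Rightarrow> real \<Rightarrow> real) \<Rightarrow> bool" where
  "classical_solution a b f g u \<longleftrightarrow>
     continuous_on (UNIV \<times> {0..}) (\<lambda>(x,t). u x t) \<and>
     (\<forall>x. u x 0 = g x) \<and>
     (\<forall>x. \<forall>t\<ge>0. u x t \<ge> 0) \<and>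
     (\<exists>(Du :: 'n \<Rightarrow> real^'n \<Rightarrow> real \<Rightarrow> real) (D2u :: 'n \<Rightarrow> 'n \<Rightarrow> real^'n \<Rightarrow> real \<Rightarrow> real)
        (Dt :: real^'n \<Rightarrow> real \<Rightarrow> real).
        (\<forall>x. \<forall>t>0.
            ((\<lambda>s. u x s) has_real_derivative Dt x t) (at t) \<and>
            (\<forall>i. ((\<lambda>h. u (x + h *\<^sub>R axis i 1) t) has_real_derivative Du i x t) (at 0)) \<and>
            (\<forall>i j. ((\<lambda>h. Du j (x + h *\<^sub>R axis i 1) t) has_real_derivative D2u i j x t) (at 0)) \<and>
            Dt x t = (\<Sum>i\<in>UNIV. \<Sum>j\<in>UNIV. a i j x * D2u i j x t)
                     + (\<Sum>i\<in>UNIV. b i x * Du i x t) + f x (u x t)) \<and>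
        continuous_on (UNIV \<times> {0<..}) (\<lambda>(x,t). Dt x t) \<and>
        (\<forall>i. continuous_on (UNIV \<times> {0<..}) (\<lambda>(x,t). Du i x t)) \<and>
        (\<forall>i j. continuous_on (UNIV \<times> {0<..}) (\<lambda>(x,t). D2u i j x t)))"

end

theory Submission
  imports Defs
begin

(*
  Condition (F-2) gives f(x, u) \<le> -D(u) for large u on every ball, where
  D(u) = u (log u \<cdot> ... \<cdot> log^(m) u)^2 (log^(m+1) u)^(2+\<epsilon>) with iterated logarithms.
  This growth lets profiles with G'' of order D(G) blow up at finite distance:
  G(s) = exp^(m+1)((\<gamma>/s)^N + B) with N \<ge> 2/\<epsilon> and \<gamma> large satisfies |G'| + |G''| \<le> D(G)/K.
  Adding G of the time and of the 2n distances from x to the faces of the unit cube around x\<^sub>0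
  gives a strict supersolution W of u_t = Lu + f(x, u) on the cube, because D is superadditive
  and the coefficients of L are bounded there.  W blows up on the parabolic boundary of the
  cube, so at a first point where a solution reaches W the maximum principle gives a
  contradiction; hence u \<le> W whatever the initial data.  The bounds W(x\<^sub>0, x\<^sub>0, t) are glued
  into one continuous majorant M.
*)

definition quad_form :: "('n::finite \<Rightarrow> 'n \<Rightarrow> real) \<Rightarrow> ('n \<Rightarrow> real) \<Rightarrow> real" where
  "quad_form S v = (\<Sum>i\<in>UNIV. \<Sum>j\<in>UNIV. S i j * v i * v j)"

definition bilinear_form :: "('n::finite \<Rightarrow> 'n \<Rightarrow> real) \<Rightarrow> ('n \<Rightarrow> real) \<Rightarrow> ('n \<Rightarrow> real) \<Rightarrow> real" where
  "bilinear_form S v w = (\<Sum>i\<in>UNIV. \<Sum>j\<in>UNIV. S i j * v i * w j)"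

definition psd :: "('n::finite \<Rightarrow> 'n \<Rightarrow> real) \<Rightarrow> bool" where
  "psd S \<longleftrightarrow> (\<forall>i j. S i j = S j i) \<and> (\<forall>v. 0 \<le> quad_form S v)"

lemma sum_mult_basis: "(\<Sum>i\<in>(UNIV::'n::finite set). f i * (if i = k then c else 0)) = f k * (c::real)"
  by (simp add: if_distrib cong: if_cong)

lemma quad_form_add:
  "quad_form S (\<lambda>i. v i + w i) = quad_form S v + bilinear_form S v w + bilinear_form S w v + quad_form S w"
  unfolding quad_form_def bilinear_form_def by (simp add: sum.distrib[symmetric] algebra_simps)

lemma bilinear_form_basis_right:
  "bilinear_form S v (\<lambda>j. if j = k then c else 0) = c * (\<Sum>i\<in>UNIV. S i k * v i)"
  unfolding bilinear_form_def sum_mult_basis by (simp add: sum_distrib_left mult_ac)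

lemma bilinear_form_basis_left:
  "bilinear_form S (\<lambda>i. if i = k then c else 0) w = c * (\<Sum>j\<in>UNIV. S k j * w j)"
proof -
  have "bilinear_form S (\<lambda>i. if i = k then c else 0) w
      = (\<Sum>i\<in>UNIV. (\<Sum>j\<in>UNIV. S i j * w j) * (if i = k then c else 0))"
    unfolding bilinear_form_def by (simp add: sum_distrib_left mult_ac)
  then show ?thesis unfolding sum_mult_basis by simp
qed

lemma quad_form_basis: "quad_form S (\<lambda>i. if i = k then c else 0) = c\<^sup>2 * S k k"
  using bilinear_form_basis_left[of S k c "\<lambda>i. if i = k then c else 0"]
  unfolding quad_form_def bilinear_form_def sum_mult_basis by (simp add: power2_eq_square)

lemma quad_form_add_basis:
  "quad_form S (\<lambda>i. v i + (if i = k then c else 0)) =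
     quad_form S v + c * (\<Sum>i\<in>UNIV. S i k * v i) + c * (\<Sum>j\<in>UNIV. S k j * v j) + c\<^sup>2 * S k k"
  by (simp add: quad_form_add bilinear_form_basis_left bilinear_form_basis_right quad_form_basis)

lemma psd_diag_zero_imp_zero:
  assumes "psd S" "S k k = 0"
  shows "S k j = 0"
proof (cases "j = k")
  case False
  have "0 \<le> quad_form S (\<lambda>i. (if i = j then 1 else 0) + (if i = k then t else 0))" for t
    using assms(1) unfolding psd_def by blast
  then have nonneg: "0 \<le> S j j + 2 * (t * S j k)" for t
    using assms False unfolding quad_form_add_basis psd_def
    by (simp add: quad_form_basis sum_mult_basis[of "\<lambda>i. S i _", simplified mult.commute] add.commute)
  have "S j k = 0"
  proof (rule ccontr)
    assume "S j k \<noteq> 0"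
    then have "2 * (- (\<bar>S j j\<bar> + 1) / (2 * S j k) * S j k) = - (\<bar>S j j\<bar> + 1)" by simp
    then show False using nonneg[of "- (\<bar>S j j\<bar> + 1) / (2 * S j k)"] by linarith
  qed
  then show ?thesis using assms(1) unfolding psd_def by metis
qed (use assms in simp)

lemma psd_schur_complement:
  assumes "psd S" "0 < S k k"
  shows "psd (\<lambda>i j. S i j - S i k * S k j / S k k)"
  unfolding psd_def
proof (intro conjI allI)
  have sym: "S i j = S j i" for i j using assms(1) unfolding psd_def by blast
  show "S i j - S i k * S k j / S k k = S j i - S j k * S k i / S k k" for i j
    by (simp add: sym[of i j] sym[of i k] sym[of k j] mult.commute)
  fix v :: "'a \<Rightarrow> real"
  define \<sigma> where "\<sigma> = (\<Sum>i\<in>UNIV. S i k * v i)"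
  have row: "(\<Sum>j\<in>UNIV. S k j * v j) = \<sigma>" unfolding \<sigma>_def using sym by simp
  have "0 \<le> quad_form S (\<lambda>i. v i + (if i = k then - \<sigma> / S k k else 0))"
    using assms(1) unfolding psd_def by blast
  also have "\<dots> = quad_form S v - \<sigma>\<^sup>2 / S k k"
    unfolding quad_form_add_basis row \<sigma>_def[symmetric] using assms(2)
    by (simp add: field_simps power2_eq_square)
  also have "\<sigma>\<^sup>2 = \<sigma> * (\<Sum>j\<in>UNIV. S k j * v j)" by (simp add: row power2_eq_square)
  also have "\<dots> = (\<Sum>i\<in>UNIV. \<Sum>j\<in>UNIV. S i k * S k j * v i * v j)"
    unfolding \<sigma>_def sum_product by (simp add: mult_ac)
  also have "quad_form S v - \<dots> / S k k = quad_form (\<lambda>i j. S i j - S i k * S k j / S k k) v"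
    unfolding quad_form_def
    by (simp add: sum_subtractf sum_divide_distrib left_diff_distrib)
  finally show "0 \<le> quad_form (\<lambda>i j. S i j - S i k * S k j / S k k) v" .
qed

text \<open>Induction on the set \<open>J\<close> of rows of \<open>S\<close> that may be nonzero: a Schur complement
  step splits off a rank-one term \<open>w w\<^sup>T\<close>, which contributes \<open>quad_form H w \<le> 0\<close>.\<close>

lemma psd_sum_mult_nonpos:
  fixes S H :: "'n::finite \<Rightarrow> 'n \<Rightarrow> real"
  assumes "psd S" and H: "\<And>v. quad_form H v \<le> 0"
  shows "(\<Sum>i\<in>UNIV. \<Sum>j\<in>UNIV. S i j * H i j) \<le> 0"
proof -
  have "\<And>S. psd S \<Longrightarrow> (\<And>i j. i \<notin> J \<Longrightarrow> S i j = 0) \<Longrightarrow> (\<Sum>i\<in>UNIV. \<Sum>j\<in>UNIV. S i j * H i j) \<le> 0"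
    if "finite J" for J :: "'n set"
    using that
  proof (induction J rule: finite_induct)
    case (insert k J)
    have "0 \<le> quad_form S (\<lambda>i. if i = k then 1 else 0)" using insert.prems(1) unfolding psd_def by blast
    then have "0 \<le> S k k" by (simp add: quad_form_basis)
    then consider "S k k = 0" | "0 < S k k" by linarith
    then show ?case
    proof cases
      case 1
      then show ?thesis
        using insert.IH[OF insert.prems(1)] insert.prems(2) psd_diag_zero_imp_zero[OF insert.prems(1) 1]
        by (metis insert_iff)
    next
      case 2
      define S' where "S' i j = S i j - S i k * S k j / S k k" for i j
      define w where "w i = S i k / sqrt (S k k)" for i
      have "psd S'" unfolding S'_def using psd_schur_complement[OF insert.prems(1) 2] .
      moreover have "S' i j = 0" if "i \<notin> J" for i j
        using insert.prems(2) 2 that unfolding S'_def by (cases "i = k") auto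
      ultimately have "(\<Sum>i\<in>UNIV. \<Sum>j\<in>UNIV. S' i j * H i j) \<le> 0" by (rule insert.IH)
      moreover have "S i j = S' i j + w i * w j" for i j
        using 2 insert.prems(1) unfolding S'_def w_def psd_def by (simp add: field_simps)
      then have "(\<Sum>i\<in>UNIV. \<Sum>j\<in>UNIV. S i j * H i j)
          = (\<Sum>i\<in>UNIV. \<Sum>j\<in>UNIV. S' i j * H i j) + quad_form H w"
        unfolding quad_form_def by (simp add: ring_distribs sum.distrib mult_ac)
      ultimately show ?thesis using H[of w] by linarith
    qed
  qed simp
  from this[OF finite assms(1)] show ?thesis by blast
qed

lemma quad_form_transpose: "quad_form (\<lambda>i j. S j i) v = quad_form S v"
  unfolding quad_form_def by (subst sum.swap) (simp add: mult_ac)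

text \<open>Only the symmetric part of \<open>A\<close> contributes, because \<open>H\<close> is symmetric.\<close>

lemma psd_sum_mult_symmetric_nonpos:
  fixes A H :: "'n::finite \<Rightarrow> 'n \<Rightarrow> real"
  assumes A: "\<And>v. 0 \<le> quad_form A v" and H: "\<And>i j. H i j = H j i" "\<And>v. quad_form H v \<le> 0"
  shows "(\<Sum>i\<in>UNIV. \<Sum>j\<in>UNIV. A i j * H i j) \<le> 0"
proof -
  define S where "S i j = (A i j + A j i) / 2" for i j
  have qS: "quad_form S v = (quad_form A v + quad_form (\<lambda>i j. A j i) v) / 2" for v
    unfolding quad_form_def S_def by (simp add: sum.distrib[symmetric] sum_divide_distrib field_simps)
  have "psd S" unfolding psd_def
  proof (intro conjI allI)
    show "S i j = S j i" for i j by (simp add: S_def add.commute)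
    show "0 \<le> quad_form S v" for v using qS[of v] A[of v] quad_form_transpose[of A v] by simp
  qed
  then have "(\<Sum>i\<in>UNIV. \<Sum>j\<in>UNIV. S i j * H i j) \<le> 0" by (rule psd_sum_mult_nonpos[OF _ H(2)])
  moreover have "(\<Sum>i\<in>UNIV. \<Sum>j\<in>UNIV. S i j * H i j)
      = ((\<Sum>i\<in>UNIV. \<Sum>j\<in>UNIV. A i j * H i j) + (\<Sum>i\<in>UNIV. \<Sum>j\<in>UNIV. A j i * H i j)) / 2"
    unfolding S_def by (simp add: sum.distrib[symmetric] sum_divide_distrib algebra_simps add_divide_distrib)
  moreover have "(\<Sum>i\<in>UNIV. \<Sum>j\<in>UNIV. A j i * H i j) = (\<Sum>i\<in>UNIV. \<Sum>j\<in>UNIV. A i j * H j i)"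
    by (rule sum.swap)
  then have "(\<Sum>i\<in>UNIV. \<Sum>j\<in>UNIV. A j i * H i j) = (\<Sum>i\<in>UNIV. \<Sum>j\<in>UNIV. A i j * H i j)"
    by (simp add: H(1))
  ultimately show ?thesis by simp
qed

lemma elliptic_pointwise_quad_form_nonneg:
  assumes "elliptic_pointwise a"
  shows "0 \<le> quad_form (\<lambda>i j. a i j x) v"
proof (cases "(\<chi> i. v i) = 0")
  case True
  then have "v i = 0" for i by (metis vec_lambda_beta zero_index)
  then show ?thesis unfolding quad_form_def by simp
next
  case False
  then have "0 < (\<Sum>i\<in>UNIV. \<Sum>j\<in>UNIV. a i j x * (\<chi> i. v i)$i * (\<chi> i. v i)$j)"
    using assms unfolding elliptic_pointwise_def by blast
  then show ?thesis unfolding quad_form_def by simp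
qed

definition has_partials_on ::
  "(real^'n::finite \<Rightarrow> real) \<Rightarrow> ('n \<Rightarrow> real^'n \<Rightarrow> real) \<Rightarrow> (real^'n) set \<Rightarrow> bool" where
  "has_partials_on \<phi> D S \<longleftrightarrow>
     (\<forall>z\<in>S. \<forall>i. ((\<lambda>h. \<phi> (z + h *\<^sub>R axis i 1)) has_real_derivative D i z) (at 0))"

lemma has_partials_onD:
  assumes "has_partials_on \<phi> D S" "p + h\<^sub>0 *\<^sub>R axis i 1 \<in> S"
  shows "((\<lambda>h. \<phi> (p + h *\<^sub>R axis i 1)) has_real_derivative D i (p + h\<^sub>0 *\<^sub>R axis i 1)) (at h\<^sub>0)"
proof -
  define z where "z = p + h\<^sub>0 *\<^sub>R axis i 1"
  have "((\<lambda>h. \<phi> (z + h *\<^sub>R axis i 1)) has_real_derivative D i z) (at 0)"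
    using assms unfolding has_partials_on_def z_def by blast
  then have "((\<lambda>h. \<phi> (z + (h - h\<^sub>0) *\<^sub>R axis i 1)) has_real_derivative D i z) (at (0 + h\<^sub>0))"
    using DERIV_shift[of "\<lambda>h. \<phi> (z + h *\<^sub>R axis i 1)" "D i z" h\<^sub>0 "-h\<^sub>0"] by (simp add: algebra_simps)
  moreover have "(\<lambda>h. \<phi> (z + (h - h\<^sub>0) *\<^sub>R axis i 1)) = (\<lambda>h. \<phi> (p + h *\<^sub>R axis i 1))"
    unfolding z_def by (simp add: algebra_simps)
  ultimately show ?thesis unfolding z_def by simp
qed

lemma MVT_from_0:
  fixes g g' :: "real \<Rightarrow> real"
  assumes "\<And>h. \<bar>h\<bar> \<le> \<bar>a\<bar> \<Longrightarrow> (g has_real_derivative g' h) (at h)"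
  shows "\<exists>\<theta>. \<bar>\<theta>\<bar> \<le> \<bar>a\<bar> \<and> g a - g 0 = a * g' \<theta>"
proof -
  consider "a = 0" | "a > 0" | "a < 0" by linarith
  then show ?thesis
  proof cases
    case 1
    then show ?thesis by (intro exI[of _ 0]) simp
  next
    case 2
    then obtain z where "0 < z" "z < a" "g a - g 0 = (a - 0) * g' z"
      using MVT2[of 0 a g g'] assms by force
    then show ?thesis by (intro exI[of _ z]) auto
  next
    case 3
    then obtain z where "a < z" "z < 0" "g 0 - g a = (0 - a) * g' z"
      using MVT2[of a 0 g g'] assms by force
    then show ?thesis by (intro exI[of _ z]) auto
  qed
qed

definition restrict_vec :: "'n::finite set \<Rightarrow> real^'n \<Rightarrow> real^'n" where
  "restrict_vec I v = (\<chi> j. if j \<in> I then v$j else 0)"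

lemma restrict_vec_insert:
  "k \<notin> I \<Longrightarrow> restrict_vec (insert k I) v = restrict_vec I v + v$k *\<^sub>R axis k 1"
  unfolding restrict_vec_def axis_def by (auto simp: vec_eq_iff)

lemma norm_restrict_vec_add_axis_le:
  "\<bar>h\<bar> \<le> \<bar>v$k\<bar> \<Longrightarrow> k \<notin> I \<Longrightarrow> norm (restrict_vec I v + h *\<^sub>R axis k 1) \<le> norm v"
  by (rule norm_le_componentwise_cart) (auto simp: restrict_vec_def axis_def)

text \<open>Changing one coordinate at a time, each step is controlled by the mean value theorem.\<close>

lemma partials_increment_estimate:
  fixes \<phi> :: "real^'n::finite \<Rightarrow> real"
  assumes \<phi>: "has_partials_on \<phi> D (ball y r)"
    and D: "\<And>i z. z \<in> ball y r \<Longrightarrow> \<bar>D i z - D i y\<bar> \<le> e"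
    and v: "norm v < r" and "finite I"
  shows "\<bar>\<phi> (y + restrict_vec I v) - \<phi> y - (\<Sum>i\<in>I. v$i * D i y)\<bar> \<le> (\<Sum>i\<in>I. \<bar>v$i\<bar>) * e"
  using \<open>finite I\<close>
proof (induction I rule: finite_induct)
  case empty
  have "restrict_vec {} v = 0" unfolding restrict_vec_def by (simp add: vec_eq_iff)
  then show ?case by simp
next
  case (insert k I)
  define p where "p = y + restrict_vec I v"
  have near: "p + h *\<^sub>R axis k 1 \<in> ball y r" if "\<bar>h\<bar> \<le> \<bar>v$k\<bar>" for h
  proof -
    have "norm (p + h *\<^sub>R axis k 1 - y) \<le> norm v"
      unfolding p_def using norm_restrict_vec_add_axis_le[OF that insert(2)] by (simp add: algebra_simps)
    then show ?thesis using v by (simp add: dist_norm norm_minus_commute)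
  qed
  have "((\<lambda>h. \<phi> (p + h *\<^sub>R axis k 1)) has_real_derivative D k (p + h *\<^sub>R axis k 1)) (at h)"
    if "\<bar>h\<bar> \<le> \<bar>v$k\<bar>" for h
    using has_partials_onD[OF \<phi> near[OF that]] .
  from MVT_from_0[OF this] obtain \<theta> where \<theta>: "\<bar>\<theta>\<bar> \<le> \<bar>v$k\<bar>"
    "\<phi> (p + v$k *\<^sub>R axis k 1) - \<phi> (p + 0 *\<^sub>R axis k 1) = v$k * D k (p + \<theta> *\<^sub>R axis k 1)"
    by blast
  have "\<bar>v$k * D k (p + \<theta> *\<^sub>R axis k 1) - v$k * D k y\<bar> \<le> \<bar>v$k\<bar> * e"
    unfolding right_diff_distrib[symmetric] abs_mult using D[OF near[OF \<theta>(1)]]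
    by (intro mult_left_mono) auto
  moreover have "y + restrict_vec (insert k I) v = p + v$k *\<^sub>R axis k 1"
    unfolding p_def restrict_vec_insert[OF insert(2)] by simp
  ultimately show ?case
    using insert \<theta>(2) unfolding p_def by (simp add: abs_le_iff distrib_right add.assoc)
qed

lemma has_derivative_if_continuous_partials:
  fixes \<phi> :: "real^'n::finite \<Rightarrow> real"
  assumes S: "open S" "y \<in> S" and \<phi>: "has_partials_on \<phi> D S" and D: "\<And>i. continuous_on S (D i)"
  shows "(\<phi> has_derivative (\<lambda>v. \<Sum>i\<in>UNIV. v$i * D i y)) (at y)"
  unfolding has_derivative_at_alt
proof (intro conjI allI impI)
  show "bounded_linear (\<lambda>v. \<Sum>i\<in>UNIV. v$i * D i y)"
    by (intro bounded_linear_sum bounded_linear_compose[OF bounded_linear_mult_left bounded_linear_vec_nth])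
next
  fix e :: real assume e: "e > 0"
  define e' where "e' = e / real CARD('n)"
  have e': "e' > 0" unfolding e'_def using e by simp
  have "(D i \<longlongrightarrow> D i y) (at y)" for i
    using D S continuous_on_eq_continuous_at isCont_def by blast
  then have "\<forall>\<^sub>F z in at y. \<forall>i. dist (D i z) (D i y) < e'"
    using e' by (intro eventually_all_finite allI) (simp add: tendsto_iff)
  then obtain d where d: "d > 0" "\<And>z i. z \<noteq> y \<Longrightarrow> dist z y < d \<Longrightarrow> dist (D i z) (D i y) < e'"
    unfolding eventually_at by blast
  obtain r0 where r0: "r0 > 0" "ball y r0 \<subseteq> S" using S open_contains_ball by blast
  define r where "r = min d r0"
  have r: "r > 0" unfolding r_def using d r0 by simp
  have Dr: "\<bar>D i z - D i y\<bar> \<le> e'" if "z \<in> ball y r" for i z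
    using d(2)[of z i] e' that unfolding r_def by (cases "z = y") (auto simp: dist_real_def dist_commute)
  have \<phi>r: "has_partials_on \<phi> D (ball y r)"
    using \<phi> r0 unfolding has_partials_on_def r_def by auto
  show "\<exists>d>0. \<forall>z. norm (z - y) < d \<longrightarrow>
      norm (\<phi> z - \<phi> y - (\<Sum>i\<in>UNIV. (z - y)$i * D i y)) \<le> e * norm (z - y)"
  proof (intro exI[of _ r] conjI allI impI r)
    fix z assume z: "norm (z - y) < r"
    have "restrict_vec UNIV (z - y) = z - y" unfolding restrict_vec_def by (simp add: vec_eq_iff)
    then have "\<bar>\<phi> z - \<phi> y - (\<Sum>i\<in>UNIV. (z - y)$i * D i y)\<bar> \<le> (\<Sum>i\<in>UNIV. \<bar>(z - y)$i\<bar>) * e'"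
      using partials_increment_estimate[OF \<phi>r Dr z, where I=UNIV] by simp
    also have "\<dots> \<le> (\<Sum>i\<in>(UNIV::'n set). norm (z - y)) * e'"
      by (intro mult_right_mono sum_mono component_le_norm_cart) (use e' in auto)
    also have "\<dots> = e * norm (z - y)" unfolding e'_def by simp
    finally show "norm (\<phi> z - \<phi> y - (\<Sum>i\<in>UNIV. (z - y)$i * D i y)) \<le> e * norm (z - y)" by simp
  qed
qed

lemma second_difference_MVT:
  fixes \<phi> :: "real^'n::finite \<Rightarrow> real"
  assumes D1: "has_partials_on \<phi> D1 S" and D2: "\<And>j. has_partials_on (D1 j) (\<lambda>i. D2 i j) S"
    and ball: "ball x \<delta> \<subseteq> S" and h: "0 < h" "2 * h < \<delta>"
  shows "\<exists>\<xi>. norm (\<xi> - x) < \<delta> \<and>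
    \<phi> (x + h *\<^sub>R axis i 1 + h *\<^sub>R axis j 1) - \<phi> (x + h *\<^sub>R axis i 1) - \<phi> (x + h *\<^sub>R axis j 1) + \<phi> x
      = h\<^sup>2 * D2 j i \<xi>"
proof -
  have near: "norm ((x + s *\<^sub>R axis i 1 + t *\<^sub>R axis j 1) - x) < \<delta>"
    if "\<bar>s\<bar> \<le> h" "\<bar>t\<bar> \<le> h" for s t
  proof -
    have "norm (s *\<^sub>R axis i 1 + t *\<^sub>R axis j (1::real)) \<le> \<bar>s\<bar> + \<bar>t\<bar>"
      by (rule order_trans[OF norm_triangle_ineq]) simp
    then show ?thesis using that h by (simp add: algebra_simps)
  qed
  have inS: "x + s *\<^sub>R axis i 1 + t *\<^sub>R axis j 1 \<in> S" if "\<bar>s\<bar> \<le> h" "\<bar>t\<bar> \<le> h" for s t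
  proof -
    have "dist x (x + s *\<^sub>R axis i 1 + t *\<^sub>R axis j 1) < \<delta>"
      using near[OF that] by (simp add: dist_norm norm_minus_commute algebra_simps)
    then show ?thesis using ball by auto
  qed
  define g where "g s = \<phi> ((x + h *\<^sub>R axis j 1) + s *\<^sub>R axis i 1) - \<phi> (x + s *\<^sub>R axis i 1)" for s
  define g' where "g' s = D1 i (x + s *\<^sub>R axis i 1 + h *\<^sub>R axis j 1) - D1 i (x + s *\<^sub>R axis i 1)" for s
  have "(g has_real_derivative g' s) (at s)" if "\<bar>s\<bar> \<le> \<bar>h\<bar>" for s
    unfolding g_def g'_def
  proof (rule DERIV_diff)
    show "((\<lambda>s. \<phi> ((x + h *\<^sub>R axis j 1) + s *\<^sub>R axis i 1)) has_real_derivative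
        D1 i (x + s *\<^sub>R axis i 1 + h *\<^sub>R axis j 1)) (at s)"
      using has_partials_onD[OF D1, of "x + h *\<^sub>R axis j 1" s i] inS[of s h] that h
      by (simp add: algebra_simps)
    show "((\<lambda>s. \<phi> (x + s *\<^sub>R axis i 1)) has_real_derivative D1 i (x + s *\<^sub>R axis i 1)) (at s)"
      using has_partials_onD[OF D1, of x s i] inS[of s 0] that h by simp
  qed
  from MVT_from_0[OF this] obtain \<sigma> where \<sigma>: "\<bar>\<sigma>\<bar> \<le> \<bar>h\<bar>" "g h - g 0 = h * g' \<sigma>" by blast
  define k where "k t = D1 i (x + \<sigma> *\<^sub>R axis i 1 + t *\<^sub>R axis j 1)" for t
  have "(k has_real_derivative D2 j i (x + \<sigma> *\<^sub>R axis i 1 + t *\<^sub>R axis j 1)) (at t)"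
    if "\<bar>t\<bar> \<le> \<bar>h\<bar>" for t
    unfolding k_def using has_partials_onD[OF D2] inS[of \<sigma> t] that \<sigma> h by simp
  from MVT_from_0[OF this] obtain \<tau> where \<tau>: "\<bar>\<tau>\<bar> \<le> \<bar>h\<bar>"
    "k h - k 0 = h * D2 j i (x + \<sigma> *\<^sub>R axis i 1 + \<tau> *\<^sub>R axis j 1)" by blast
  have "g' \<sigma> = k h - k 0" unfolding g'_def k_def by simp
  moreover have "g h - g 0 = \<phi> (x + h *\<^sub>R axis i 1 + h *\<^sub>R axis j 1) - \<phi> (x + h *\<^sub>R axis i 1)
      - \<phi> (x + h *\<^sub>R axis j 1) + \<phi> x"
    unfolding g_def by (simp add: algebra_simps)
  ultimately show ?thesis
    using near[of \<sigma> \<tau>] \<sigma> \<tau> h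
    by (intro exI[of _ "x + \<sigma> *\<^sub>R axis i 1 + \<tau> *\<^sub>R axis j 1"]) (simp add: power2_eq_square)
qed

text \<open>Schwarz's theorem: the second difference quotient approximates both mixed partials.\<close>

lemma mixed_partials_symmetric:
  fixes \<phi> :: "real^'n::finite \<Rightarrow> real"
  assumes S: "open S" "x \<in> S"
    and D1: "has_partials_on \<phi> D1 S" and D2: "\<And>j. has_partials_on (D1 j) (\<lambda>i. D2 i j) S"
    and cont: "\<And>i j. continuous_on S (D2 i j)"
  shows "D2 i j x = D2 j i x"
proof (rule ccontr)
  assume ne: "D2 i j x \<noteq> D2 j i x"
  define e where "e = \<bar>D2 i j x - D2 j i x\<bar> / 2"
  have e: "e > 0" using ne unfolding e_def by simp
  have "isCont (D2 a b) x" for a b using cont S continuous_on_eq_continuous_at by blast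
  then have "\<forall>\<^sub>F z in at x. \<forall>ab\<in>{(i, j), (j, i)}. dist (D2 (fst ab) (snd ab) z) (D2 (fst ab) (snd ab) x) < e"
    using e by (intro eventually_ball_finite ballI) (auto simp: isCont_def tendsto_iff)
  then obtain d where d: "d > 0"
    "\<And>z. z \<noteq> x \<Longrightarrow> dist z x < d \<Longrightarrow> \<bar>D2 i j z - D2 i j x\<bar> < e \<and> \<bar>D2 j i z - D2 j i x\<bar> < e"
    unfolding eventually_at by (auto simp: dist_real_def)
  obtain r where r: "r > 0" "ball x r \<subseteq> S" using S open_contains_ball by blast
  define \<delta> where "\<delta> = min r d"
  have \<delta>: "\<delta> > 0" "ball x \<delta> \<subseteq> S" unfolding \<delta>_def using r d by auto
  have close: "\<bar>D2 i j z - D2 i j x\<bar> < e \<and> \<bar>D2 j i z - D2 j i x\<bar> < e" if "norm (z - x) < \<delta>" for z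
    using d(2)[of z] e that unfolding \<delta>_def by (cases "z = x") (auto simp: dist_norm)
  define h where "h = \<delta> / 4"
  have h: "0 < h" "2 * h < \<delta>" unfolding h_def using \<delta> by auto
  obtain \<xi> where \<xi>: "norm (\<xi> - x) < \<delta>"
    "\<phi> (x + h *\<^sub>R axis i 1 + h *\<^sub>R axis j 1) - \<phi> (x + h *\<^sub>R axis i 1) - \<phi> (x + h *\<^sub>R axis j 1) + \<phi> x
       = h\<^sup>2 * D2 j i \<xi>"
    using second_difference_MVT[OF D1 D2 \<delta>(2) h] by blast
  obtain \<zeta> where \<zeta>: "norm (\<zeta> - x) < \<delta>"
    "\<phi> (x + h *\<^sub>R axis j 1 + h *\<^sub>R axis i 1) - \<phi> (x + h *\<^sub>R axis j 1) - \<phi> (x + h *\<^sub>R axis i 1) + \<phi> x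
       = h\<^sup>2 * D2 i j \<zeta>"
    using second_difference_MVT[OF D1 D2 \<delta>(2) h, of j i] by blast
  have "D2 j i \<xi> = D2 i j \<zeta>" using \<xi>(2) \<zeta>(2) h by (simp add: algebra_simps)
  moreover have "\<bar>D2 j i \<xi> - D2 j i x\<bar> < e" "\<bar>D2 i j \<zeta> - D2 i j x\<bar> < e"
    using close[OF \<xi>(1)] close[OF \<zeta>(1)] by auto
  ultimately show False unfolding e_def by (simp add: abs_if split: if_splits)
qed

lemma has_real_derivative_along_line:
  fixes \<phi> :: "real^'n::finite \<Rightarrow> real"
  assumes "(\<phi> has_derivative (\<lambda>w. \<Sum>i\<in>UNIV. w$i * D i)) (at (x + h *\<^sub>R \<nu>))"
  shows "((\<lambda>h. \<phi> (x + h *\<^sub>R \<nu>)) has_real_derivative (\<Sum>i\<in>UNIV. \<nu>$i * D i)) (at h)"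
proof -
  have "((\<lambda>h. x + h *\<^sub>R \<nu>) has_derivative (\<lambda>h. h *\<^sub>R \<nu>)) (at h)"
    by (auto intro!: derivative_eq_intros)
  from has_derivative_compose[OF this assms]
  have "((\<lambda>h. \<phi> (x + h *\<^sub>R \<nu>)) has_derivative (\<lambda>h'. \<Sum>i\<in>UNIV. h' * (\<nu>$i * D i))) (at h)"
    by (simp add: mult.assoc)
  moreover have "(\<lambda>h'. \<Sum>i\<in>UNIV. h' * (\<nu>$i * D i)) = (*) (\<Sum>i\<in>UNIV. \<nu>$i * D i)"
    by (simp add: fun_eq_iff sum_distrib_left mult_ac)
  ultimately show ?thesis unfolding has_field_derivative_def by simp
qed

lemma local_max_partials_zero:
  assumes S: "open S" "x \<in> S" and max: "\<forall>y\<in>S. \<phi> y \<le> \<phi> x" and D1: "has_partials_on \<phi> D1 S"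
  shows "D1 i x = 0"
proof -
  obtain r where r: "r > 0" "ball x r \<subseteq> S" using S open_contains_ball by blast
  have "((\<lambda>h. \<phi> (x + h *\<^sub>R axis i 1)) has_real_derivative D1 i x) (at 0)"
    using D1 S unfolding has_partials_on_def by blast
  moreover have "\<forall>h. \<bar>0 - h\<bar> < r \<longrightarrow> \<phi> (x + h *\<^sub>R axis i 1) \<le> \<phi> (x + 0 *\<^sub>R axis i 1)"
  proof (intro allI impI)
    fix h :: real assume "\<bar>0 - h\<bar> < r"
    then have "x + h *\<^sub>R axis i 1 \<in> ball x r" by (simp add: dist_norm)
    then show "\<phi> (x + h *\<^sub>R axis i 1) \<le> \<phi> (x + 0 *\<^sub>R axis i 1)" using r max by auto
  qed
  ultimately show ?thesis using DERIV_local_max[OF _ r(1)] by blast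
qed

text \<open>Along the line \<open>x + h \<nu>\<close> the first derivative vanishes at \<open>h = 0\<close>; if the second
  derivative were positive there, \<open>\<phi>\<close> would increase to the right of \<open>x\<close>.\<close>

lemma local_max_hessian_nonpos:
  assumes S: "open S" "x \<in> S" and max: "\<forall>y\<in>S. \<phi> y \<le> \<phi> x"
    and D1: "has_partials_on \<phi> D1 S" "\<And>i. continuous_on S (D1 i)"
    and D2: "\<And>j. has_partials_on (D1 j) (\<lambda>i. D2 i j) S" "\<And>i j. continuous_on S (D2 i j)"
  shows "quad_form (\<lambda>i j. D2 i j x) v \<le> 0"
proof (rule ccontr)
  assume pos: "\<not> quad_form (\<lambda>i j. D2 i j x) v \<le> 0"
  define \<nu> where "\<nu> = (\<chi> i. v i)"
  obtain r where r: "r > 0" "ball x r \<subseteq> S" using S open_contains_ball by blast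
  define \<rho> where "\<rho> = r / (norm \<nu> + 1)"
  have n: "norm \<nu> + 1 > 0" using norm_ge_zero[of \<nu>] by linarith
  then have \<rho>: "\<rho> > 0" unfolding \<rho>_def using r by simp
  have line: "x + h *\<^sub>R \<nu> \<in> S" if "\<bar>h\<bar> < \<rho>" for h
  proof -
    have "norm (h *\<^sub>R \<nu>) \<le> \<rho> * norm \<nu>" using that by (simp add: mult_right_mono)
    also have "\<dots> < r" unfolding \<rho>_def using r n by (simp add: field_simps)
    finally show ?thesis using r by (auto simp: dist_norm)
  qed
  define G where "G h = (\<Sum>i\<in>UNIV. \<nu>$i * D1 i (x + h *\<^sub>R \<nu>))" for h
  have G: "((\<lambda>h. \<phi> (x + h *\<^sub>R \<nu>)) has_real_derivative G h) (at h)" if "\<bar>h\<bar> < \<rho>" for h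
    unfolding G_def
    by (rule has_real_derivative_along_line[OF has_derivative_if_continuous_partials[OF S(1) line[OF that] D1]])
  have "((\<lambda>h. D1 i (x + h *\<^sub>R \<nu>)) has_real_derivative (\<Sum>j\<in>UNIV. \<nu>$j * D2 j i x)) (at 0)" for i
    using has_real_derivative_along_line[of "D1 i" "\<lambda>j. D2 j i x" x 0 \<nu>]
      has_derivative_if_continuous_partials[OF S D2(1) D2(2)] by simp
  then have "(G has_real_derivative (\<Sum>i\<in>UNIV. \<nu>$i * (\<Sum>j\<in>UNIV. \<nu>$j * D2 j i x))) (at 0)"
    unfolding G_def by (intro DERIV_sum DERIV_cmult)
  moreover have "(\<Sum>i\<in>UNIV. \<nu>$i * (\<Sum>j\<in>UNIV. \<nu>$j * D2 j i x)) = quad_form (\<lambda>i j. D2 i j x) v"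
    unfolding quad_form_def \<nu>_def by (subst sum.swap) (simp add: sum_distrib_left mult_ac)
  ultimately obtain e where e: "e > 0" "\<And>h. 0 < h \<Longrightarrow> h < e \<Longrightarrow> G 0 < G (0 + h)"
    using DERIV_pos_inc_right pos by (metis not_le)
  have "G 0 = 0" unfolding G_def using local_max_partials_zero[OF S max D1(1)] by simp
  define h where "h = min e \<rho> / 2"
  have h: "0 < h" "h < e" "h < \<rho>" unfolding h_def using e \<rho> by auto
  obtain z where z: "0 < z" "z < h" "\<phi> (x + h *\<^sub>R \<nu>) - \<phi> (x + 0 *\<^sub>R \<nu>) = (h - 0) * G z"
    using MVT2[OF h(1), of "\<lambda>h. \<phi> (x + h *\<^sub>R \<nu>)" G] G h by force
  have "0 < h * G z" using e(2)[of z] z h \<open>G 0 = 0\<close> by simp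
  then have "\<phi> x < \<phi> (x + h *\<^sub>R \<nu>)" using z(3) by simp
  moreover have "\<phi> (x + h *\<^sub>R \<nu>) \<le> \<phi> x" using max line[of h] h by simp
  ultimately show False by simp
qed

lemma elliptic_sum_at_local_max_nonpos:
  assumes S: "open S" "x \<in> S" and max: "\<forall>y\<in>S. \<phi> y \<le> \<phi> x"
    and D1: "has_partials_on \<phi> D1 S" "\<And>i. continuous_on S (D1 i)"
    and D2: "\<And>j. has_partials_on (D1 j) (\<lambda>i. D2 i j) S" "\<And>i j. continuous_on S (D2 i j)"
    and A: "\<And>v. 0 \<le> quad_form A v"
  shows "(\<Sum>i\<in>UNIV. \<Sum>j\<in>UNIV. A i j * D2 i j x) \<le> 0"
  using mixed_partials_symmetric[OF S D1(1) D2] local_max_hessian_nonpos[OF S max D1 D2]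
  by (rule psd_sum_mult_symmetric_nonpos[OF A])

definition iter_exp :: "nat \<Rightarrow> real \<Rightarrow> real" where
  "iter_exp j = exp ^^ j"

definition iter_exp_prod :: "nat \<Rightarrow> real \<Rightarrow> real" where
  "iter_exp_prod j v = (\<Prod>i=1..j. iter_exp i v)"

fun iter_exp_prod_deriv :: "nat \<Rightarrow> real \<Rightarrow> real" where
  "iter_exp_prod_deriv 0 v = 0"
| "iter_exp_prod_deriv (Suc j) v =
     iter_exp_prod_deriv j v * iter_exp (Suc j) v + iter_exp_prod j v * iter_exp_prod (Suc j) v"

lemma iter_exp_0 [simp]: "iter_exp 0 v = v"
  by (simp add: iter_exp_def)

lemma iter_exp_Suc: "iter_exp (Suc j) v = exp (iter_exp j v)"
  by (simp add: iter_exp_def)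

lemma iter_exp_prod_0 [simp]: "iter_exp_prod 0 v = 1"
  by (simp add: iter_exp_prod_def)

lemma iter_exp_prod_Suc: "iter_exp_prod (Suc j) v = iter_exp_prod j v * iter_exp (Suc j) v"
  by (simp add: iter_exp_prod_def prod.cl_ivl_Suc)

lemma iter_exp_ge: "v \<le> iter_exp j v"
proof (induction j)
  case (Suc j)
  then show ?case unfolding iter_exp_Suc using exp_ge_add_one_self[of "iter_exp j v"] by linarith
qed simp

lemma iter_exp_ge_1: "0 \<le> v \<Longrightarrow> 1 \<le> j \<Longrightarrow> 1 \<le> iter_exp j v"
  using iter_exp_ge[of v "j - 1"] by (cases j) (auto simp: iter_exp_Suc)

lemma iter_exp_1_ge_1: "1 \<le> iter_exp j 1"
  using iter_exp_ge[of 1 j] .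

lemma iter_exp_mono: "v \<le> w \<Longrightarrow> iter_exp j v \<le> iter_exp j w"
  by (induction j) (auto simp: iter_exp_Suc)

lemma iter_exp_prod_ge_1: "0 \<le> v \<Longrightarrow> 1 \<le> iter_exp_prod j v"
  unfolding iter_exp_prod_def by (rule prod_ge_1) (auto intro: iter_exp_ge_1)

lemma iter_exp_prod_mono_index: "0 \<le> v \<Longrightarrow> i \<le> j \<Longrightarrow> iter_exp_prod i v \<le> iter_exp_prod j v"
proof (induction j)
  case (Suc j)
  have "iter_exp_prod j v \<le> iter_exp_prod (Suc j) v"
    using iter_exp_prod_ge_1[of v j] iter_exp_ge_1[of v "Suc j"] Suc.prems
    by (simp add: iter_exp_prod_Suc mult_le_cancel_left1)
  then show ?case using Suc by (auto simp: le_Suc_eq)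
qed simp

lemma DERIV_iter_exp: "(iter_exp j has_real_derivative iter_exp_prod j v) (at v)"
proof (induction j arbitrary: v)
  case (Suc j)
  have "((\<lambda>v. exp (iter_exp j v)) has_real_derivative exp (iter_exp j v) * iter_exp_prod j v) (at v)"
    by (rule DERIV_chain2[OF DERIV_exp Suc.IH])
  then show ?case by (simp add: iter_exp_prod_Suc iter_exp_Suc[abs_def] mult.commute)
qed (simp add: iter_exp_def id_def)

lemma DERIV_iter_exp_prod: "(iter_exp_prod j has_real_derivative iter_exp_prod_deriv j v) (at v)"
proof (induction j)
  case (Suc j)
  have "((\<lambda>v. iter_exp_prod j v * iter_exp (Suc j) v) has_real_derivative
      iter_exp_prod_deriv j v * iter_exp (Suc j) v + iter_exp_prod j v * iter_exp_prod (Suc j) v) (at v)"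
    using DERIV_mult[OF Suc.IH DERIV_iter_exp[of "Suc j" v]] by (simp add: mult.commute)
  then show ?case by (simp add: iter_exp_prod_Suc[abs_def])
qed (simp add: iter_exp_prod_def)

lemma isCont_iter_exp: "isCont (iter_exp j) v"
  using DERIV_iter_exp DERIV_isCont by blast

lemma isCont_iter_exp_prod: "isCont (iter_exp_prod j) v"
  using DERIV_iter_exp_prod DERIV_isCont by blast

lemma isCont_iter_exp_prod_deriv: "isCont (iter_exp_prod_deriv j) v"
  by (induction j) (auto intro!: continuous_intros isCont_iter_exp isCont_iter_exp_prod)

lemma iter_exp_prod_deriv_bounds:
  "0 \<le> v \<Longrightarrow> 0 \<le> iter_exp_prod_deriv j v \<and>
     iter_exp_prod_deriv j v \<le> real j * iter_exp_prod j v * iter_exp_prod (j - 1) v"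
proof (induction j)
  case (Suc j)
  have E: "1 \<le> iter_exp (Suc j) v" using iter_exp_ge_1 Suc.prems by simp
  have P: "1 \<le> iter_exp_prod j v" "1 \<le> iter_exp_prod (Suc j) v" using iter_exp_prod_ge_1 Suc.prems by auto
  have "iter_exp_prod_deriv (Suc j) v
      \<le> (real j * iter_exp_prod j v * iter_exp_prod (j - 1) v) * iter_exp (Suc j) v
        + iter_exp_prod j v * iter_exp_prod (Suc j) v"
    using Suc E by (auto intro!: mult_right_mono)
  also have "\<dots> = real j * iter_exp_prod (Suc j) v * iter_exp_prod (j - 1) v
      + iter_exp_prod (Suc j) v * iter_exp_prod j v"
    by (simp add: iter_exp_prod_Suc algebra_simps)
  also have "\<dots> \<le> real j * iter_exp_prod (Suc j) v * iter_exp_prod j v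
      + iter_exp_prod (Suc j) v * iter_exp_prod j v"
    using P iter_exp_prod_mono_index[of v "j - 1" j] Suc.prems by (auto intro!: mult_left_mono)
  finally show ?case using Suc E P by (auto simp: algebra_simps intro!: add_nonneg_nonneg mult_nonneg_nonneg)
qed simp

lemma iterlog_0 [simp]: "iterlog 0 x = x"
  by (simp add: iterlog_def)

lemma iterlog_Suc: "iterlog (Suc i) x = ln (iterlog i x)"
  by (simp add: iterlog_def)

lemma iterlog_iter_exp: "i \<le> j \<Longrightarrow> iterlog i (iter_exp j v) = iter_exp (j - i) v"
proof (induction i)
  case (Suc i)
  then have "j - i = Suc (j - Suc i)" by simp
  then show ?case using Suc by (simp add: iterlog_Suc iter_exp_Suc)
qed simp

lemma prod_iterlog_iter_exp: "(\<Prod>i=1..m. iterlog i (iter_exp (m+1) v)) = iter_exp_prod m v"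
proof -
  have "(\<Prod>i=1..m. iterlog i (iter_exp (m+1) v)) = (\<Prod>i=1..m. iter_exp (m + 1 - i) v)"
    by (rule prod.cong) (auto simp: iterlog_iter_exp)
  also have "\<dots> = (\<Prod>i=1..m. iter_exp i v)"
    by (rule prod.reindex_bij_witness[of _ "\<lambda>i. m + 1 - i" "\<lambda>i. m + 1 - i"]) auto
  finally show ?thesis by (simp add: iter_exp_prod_def)
qed

lemma iterlog_bounds:
  assumes "iter_exp j 1 \<le> x" "x \<le> y" "i \<le> j"
  shows "iter_exp (j - i) 1 \<le> iterlog i x \<and> iterlog i x \<le> iterlog i y"
  using \<open>i \<le> j\<close>
proof (induction i)
  case (Suc i)
  then have IH: "iter_exp (j - i) 1 \<le> iterlog i x" "iterlog i x \<le> iterlog i y" by auto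
  have ji: "j - i = Suc (j - Suc i)" using Suc.prems by simp
  have pos: "0 < iter_exp (j - i) 1" unfolding ji iter_exp_Suc by simp
  have "iter_exp (j - Suc i) 1 = ln (iter_exp (j - i) 1)" using ji by (simp add: iter_exp_Suc)
  also have "\<dots> \<le> ln (iterlog i x)" using IH(1) pos by simp
  finally show ?case using IH pos by (simp add: iterlog_Suc)
qed (use assms in simp)

text \<open>\<open>iterlog_rate m \<epsilon>\<close> is the comparison function of condition (F-2).\<close>

definition iterlog_rate :: "nat \<Rightarrow> real \<Rightarrow> real \<Rightarrow> real" where
  "iterlog_rate m \<epsilon> u = u * (\<Prod>i=1..m. iterlog i u)^2 * (iterlog (m+1) u) powr (2 + \<epsilon>)"

definition iterlog_weight :: "nat \<Rightarrow> real \<Rightarrow> real \<Rightarrow> real" where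
  "iterlog_weight m \<epsilon> u = (\<Prod>i=1..m. iterlog i u)^2 * (iterlog (m+1) u) powr (2 + \<epsilon>)"

lemma iterlog_rate_eq: "iterlog_rate m \<epsilon> u = u * iterlog_weight m \<epsilon> u"
  unfolding iterlog_rate_def iterlog_weight_def by simp

lemma iterlog_rate_iter_exp:
  "iterlog_rate m \<epsilon> (iter_exp (m+1) v) = iter_exp (m+1) v * iter_exp_prod m v ^ 2 * v powr (2 + \<epsilon>)"
  unfolding iterlog_rate_def prod_iterlog_iter_exp using iterlog_iter_exp[of "m+1" "m+1" v] by simp

lemma iterlog_ge_1:
  assumes "iter_exp (m+1) 1 \<le> x" "i \<le> m + 1"
  shows "1 \<le> iterlog i x"
  using iterlog_bounds[OF assms(1) order_refl assms(2)] iter_exp_1_ge_1[of "m + 1 - i"] by linarith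

lemma iterlog_weight_mono:
  assumes "iter_exp (m+1) 1 \<le> x" "x \<le> y" "0 < \<epsilon>"
  shows "iterlog_weight m \<epsilon> x \<le> iterlog_weight m \<epsilon> y"
proof -
  have mono: "iterlog i x \<le> iterlog i y" if "i \<le> m + 1" for i
    using iterlog_bounds[OF assms(1,2) that] by blast
  have nonneg: "0 \<le> iterlog i x" if "i \<le> m + 1" for i
    using iterlog_ge_1[OF assms(1) that] by linarith
  have "(\<Prod>i=1..m. iterlog i x) \<le> (\<Prod>i=1..m. iterlog i y)"
    by (intro prod_mono) (simp add: nonneg mono)
  moreover have "0 \<le> (\<Prod>i=1..m. iterlog i x)"
    by (intro prod_nonneg) (simp add: nonneg)
  ultimately have "(\<Prod>i=1..m. iterlog i x)^2 \<le> (\<Prod>i=1..m. iterlog i y)^2"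
    by (rule power_mono)
  moreover have "iterlog (m+1) x powr (2 + \<epsilon>) \<le> iterlog (m+1) y powr (2 + \<epsilon>)"
    using iterlog_ge_1[OF assms(1), of "m+1"] mono[of "m+1"] assms(3) by (intro powr_mono2) auto
  ultimately show ?thesis unfolding iterlog_weight_def by (rule mult_mono) auto
qed

lemma iterlog_rate_pos:
  assumes "iter_exp (m+1) 1 \<le> x"
  shows "0 < iterlog_rate m \<epsilon> x"
proof -
  have pos: "0 < iterlog i x" if "i \<le> m + 1" for i
    using iterlog_ge_1[OF assms that] by linarith
  have "0 < (\<Prod>i=1..m. iterlog i x)" by (rule prod_pos) (simp add: pos)
  moreover have "0 < iterlog (m+1) x powr (2 + \<epsilon>)" using pos[of "m+1"] by simp
  moreover have "0 < x" using assms iter_exp_1_ge_1[of "m+1"] by linarith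
  ultimately show ?thesis unfolding iterlog_rate_def by (metis mult_pos_pos zero_less_power)
qed

text \<open>Superadditivity, because \<open>iterlog_rate m \<epsilon> u / u\<close> is nondecreasing.\<close>

lemma iterlog_rate_superadditive:
  fixes c d :: "'n::finite \<Rightarrow> real" and m :: nat
  defines "L \<equiv> iter_exp (m+1) 1"
  assumes \<epsilon>: "0 < \<epsilon>" and a: "L \<le> a" and c: "\<And>i. L \<le> c i" and d: "\<And>i. L \<le> d i"
  shows "iterlog_rate m \<epsilon> a + (\<Sum>i\<in>UNIV. iterlog_rate m \<epsilon> (c i) + iterlog_rate m \<epsilon> (d i))
    \<le> iterlog_rate m \<epsilon> (a + (\<Sum>i\<in>UNIV. c i + d i))"
proof -
  define S where "S = a + (\<Sum>i\<in>UNIV. c i + d i)"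
  define q where "q = iterlog_weight m \<epsilon>"
  have L: "1 \<le> L" unfolding L_def by (rule iter_exp_1_ge_1)
  have nonneg: "0 \<le> a" "0 \<le> c i" "0 \<le> d i" for i using a c[of i] d[of i] L by linarith+
  then have cd0: "0 \<le> c i + d i" for i by simp
  have cd: "c i + d i \<le> (\<Sum>i\<in>UNIV. c i + d i)" for i
    by (intro member_le_sum) (simp_all add: cd0)
  have "0 \<le> (\<Sum>i\<in>UNIV. c i + d i)" by (intro sum_nonneg) (simp add: cd0)
  then have qa: "q a \<le> q S" and qc: "q (c i) \<le> q S" and qd: "q (d i) \<le> q S" for i
    using cd[of i] a c[of i] d[of i] L \<epsilon> unfolding q_def S_def L_def
    by (auto intro!: iterlog_weight_mono)
  have "iterlog_rate m \<epsilon> a + (\<Sum>i\<in>UNIV. iterlog_rate m \<epsilon> (c i) + iterlog_rate m \<epsilon> (d i))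
      = a * q a + (\<Sum>i\<in>UNIV. c i * q (c i) + d i * q (d i))"
    unfolding q_def iterlog_rate_eq ..
  also have "\<dots> \<le> a * q S + (\<Sum>i\<in>UNIV. c i * q S + d i * q S)"
    using qa qc qd nonneg by (intro add_mono mult_left_mono sum_mono) auto
  also have "\<dots> = iterlog_rate m \<epsilon> S"
    unfolding S_def q_def iterlog_rate_eq by (simp add: algebra_simps sum.distrib sum_distrib_right)
  finally show ?thesis unfolding S_def .
qed

lemma DERIV_divide_power:
  fixes a s :: real
  assumes s: "0 < s" and M: "1 \<le> M"
  shows "((\<lambda>s. a / s^M) has_real_derivative -(real M * a / s^(M+1))) (at s)"
proof -
  obtain k where k: "M = Suc k" using M by (cases M) auto
  have "((\<lambda>s. a / s^M) has_real_derivative (0 * s^M - a * (real M * s^(M - Suc 0))) / (s^M * s^M)) (at s)"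
    by (intro DERIV_divide DERIV_const DERIV_pow) (use s in auto)
  moreover have "(0 * s^M - a * (real M * s^(M - Suc 0))) / (s^M * s^M) = -(real M * a / s^(M+1))"
    unfolding k using s by (simp add: field_simps power_Suc)
  ultimately show ?thesis by simp
qed

lemma iter_exp_comp_has_derivatives:
  assumes v: "(v has_real_derivative v' s) (at s)" and v': "(v' has_real_derivative v'' s) (at s)"
    and "isCont v'' s"
  shows "((\<lambda>s. iter_exp j (v s)) has_real_derivative iter_exp_prod j (v s) * v' s) (at s)"
    and "((\<lambda>s. iter_exp_prod j (v s) * v' s) has_real_derivative
           iter_exp_prod_deriv j (v s) * (v' s)\<^sup>2 + iter_exp_prod j (v s) * v'' s) (at s)"
    and "isCont (\<lambda>s. iter_exp_prod_deriv j (v s) * (v' s)\<^sup>2 + iter_exp_prod j (v s) * v'' s) s"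
proof -
  show "((\<lambda>s. iter_exp j (v s)) has_real_derivative iter_exp_prod j (v s) * v' s) (at s)"
    by (rule DERIV_chain2[OF DERIV_iter_exp v])
  have "((\<lambda>s. iter_exp_prod j (v s) * v' s) has_real_derivative
      iter_exp_prod_deriv j (v s) * v' s * v' s + v'' s * iter_exp_prod j (v s)) (at s)"
    by (rule DERIV_mult[OF DERIV_chain2[OF DERIV_iter_exp_prod v] v'])
  then show "((\<lambda>s. iter_exp_prod j (v s) * v' s) has_real_derivative
      iter_exp_prod_deriv j (v s) * (v' s)\<^sup>2 + iter_exp_prod j (v s) * v'' s) (at s)"
    by (simp add: power2_eq_square mult_ac)
  have "isCont v s" "isCont v' s" using v v' DERIV_isCont by blast+
  then show "isCont (\<lambda>s. iter_exp_prod_deriv j (v s) * (v' s)\<^sup>2 + iter_exp_prod j (v s) * v'' s) s"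
    using \<open>isCont v'' s\<close> isCont_o2[OF _ isCont_iter_exp_prod_deriv] isCont_o2[OF _ isCont_iter_exp_prod]
    by (auto intro!: continuous_intros)
qed

lemma powr_two_plus_ge:
  fixes v w x \<epsilon> :: real
  assumes v: "1 \<le> v" and w: "0 < w" "w \<le> v" "w = x ^ N" and x: "0 < x" and N: "1 \<le> N"
    and \<epsilon>: "2 / real N \<le> \<epsilon>"
  shows "v\<^sup>2 * x\<^sup>2 \<le> v powr (2 + \<epsilon>)"
proof -
  have "w powr (2 / real N) = (x powr real N) powr (2 / real N)" using w x by (simp add: powr_realpow)
  also have "\<dots> = x\<^sup>2" using N x by (simp add: powr_powr)
  finally have "v\<^sup>2 * x\<^sup>2 = v\<^sup>2 * w powr (2 / real N)" by simp
  also have "\<dots> \<le> v\<^sup>2 * v powr (2 / real N)"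
    by (intro mult_left_mono powr_mono2) (use w in auto)
  also have "\<dots> = v powr (2 + 2 / real N)" using v by (simp add: powr_add)
  also have "\<dots> \<le> v powr (2 + \<epsilon>)" by (rule powr_mono) (use \<epsilon> v in auto)
  finally show ?thesis .
qed

text \<open>The estimate behind the barrier: with \<open>w = (\<gamma>/s)\<^sup>N\<close>, \<open>a = 1/s\<close> and \<open>v = w + B\<close>, the
  first two derivatives of \<open>iter_exp (m+1) \<circ> v\<close> are at most a multiple of
  \<open>iter_exp (m+1) v * (iter_exp_prod m v)\<^sup>2 * v\<^sup>2 * a\<^sup>2\<close>.\<close>

lemma barrier_derivative_bound:
  fixes E P v w a N M d :: real
  assumes E: "1 \<le> E" and P: "1 \<le> P" and w: "0 \<le> w" "w \<le> v" and v: "1 \<le> v"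
    and a: "0 < a" "1 \<le> 2 * a" and N: "0 \<le> N" and M: "0 \<le> M"
    and d: "0 \<le> d" "d \<le> M * (P * E) * P"
  shows "\<bar>(P * E) * (-(N * a * w))\<bar> + \<bar>d * (N * a * w)\<^sup>2 + (P * E) * (N * (N + 1) * a\<^sup>2 * w)\<bar>
         \<le> (2 * N + M * N\<^sup>2 + N * (N + 1)) * (E * P\<^sup>2 * v\<^sup>2 * a\<^sup>2)"
proof -
  have "v \<le> v\<^sup>2" using v by (simp add: power2_eq_square)
  then have wv: "w \<le> v\<^sup>2" using w by linarith
  have P2: "P \<le> P\<^sup>2" using P by (simp add: power2_eq_square)
  have first: "\<bar>(P * E) * (-(N * a * w))\<bar> \<le> 2 * N * (E * P\<^sup>2 * v\<^sup>2 * a\<^sup>2)"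
  proof -
    have "E * P * a * w \<le> E * P\<^sup>2 * a * v\<^sup>2"
      using E P a w P2 wv by (intro mult_mono) auto
    also have "\<dots> \<le> E * P\<^sup>2 * v\<^sup>2 * a * (2 * a)"
      using E P a by (simp add: mult_le_cancel_left1)
    finally have "N * (E * P * a * w) \<le> N * (E * P\<^sup>2 * v\<^sup>2 * a * (2 * a))"
      using N by (rule mult_left_mono)
    moreover have "\<bar>(P * E) * (-(N * a * w))\<bar> = N * (E * P * a * w)"
      using E P w a N by (simp add: abs_mult)
    ultimately show ?thesis by (simp add: power2_eq_square mult_ac)
  qed
  have second: "d * (N * a * w)\<^sup>2 \<le> M * N\<^sup>2 * (E * P\<^sup>2 * v\<^sup>2 * a\<^sup>2)"
  proof -
    have "d * (N * a * w)\<^sup>2 \<le> (M * (P * E) * P) * (N * a * w)\<^sup>2"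
      using d by (intro mult_right_mono) auto
    also have "\<dots> = M * N\<^sup>2 * (E * P\<^sup>2 * w\<^sup>2 * a\<^sup>2)" by (simp add: power2_eq_square mult_ac)
    also have "\<dots> \<le> M * N\<^sup>2 * (E * P\<^sup>2 * v\<^sup>2 * a\<^sup>2)"
      using w E P M by (intro mult_left_mono mult_right_mono power_mono) auto
    finally show ?thesis .
  qed
  have third: "(P * E) * (N * (N + 1) * a\<^sup>2 * w) \<le> N * (N + 1) * (E * P\<^sup>2 * v\<^sup>2 * a\<^sup>2)"
  proof -
    have "P * w \<le> P\<^sup>2 * v\<^sup>2" using P2 wv P w by (intro mult_mono) auto
    then have "E * (N * (N + 1) * a\<^sup>2) * (P * w) \<le> E * (N * (N + 1) * a\<^sup>2) * (P\<^sup>2 * v\<^sup>2)"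
      using E N by (intro mult_left_mono) auto
    then show ?thesis by (simp add: mult_ac)
  qed
  have "0 \<le> d * (N * a * w)\<^sup>2 + (P * E) * (N * (N + 1) * a\<^sup>2 * w)"
    using d E P N w by auto
  then show ?thesis using first second third by (simp add: algebra_simps)
qed

text \<open>Choosing \<open>N \<ge> 2/\<epsilon>\<close> makes \<open>iterlog_rate m \<epsilon> (G s)\<close> dominate \<open>(\<gamma>/s)\<^sup>2\<close> times the
  derivative bound above, and \<open>\<gamma>\<close> large makes \<open>G'\<close> and \<open>G''\<close> smaller than
  \<open>iterlog_rate m \<epsilon> (G s) / K\<close>.\<close>

locale barrier_profile =
  fixes m :: nat and \<epsilon> K U :: real
  assumes \<epsilon>_pos: "0 < \<epsilon>" and K_pos: "0 < K"
begin

definition N :: nat where "N = nat \<lceil>2 / \<epsilon>\<rceil> + 1"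

text \<open>\<open>C\<close> is the constant of \<open>barrier_derivative_bound\<close> for \<open>M = m + 1\<close>.\<close>

definition C :: real where "C = 2 * real N + real (m+1) * (real N)\<^sup>2 + real N * (real N + 1)"

definition \<gamma> :: real where "\<gamma> = sqrt (K * C) + 1"

text \<open>\<open>B \<ge> U\<close> makes \<open>G \<ge> U\<close>; \<open>B \<ge> K N \<gamma>\<^sup>N\<close> controls \<open>G'\<close> for \<open>s \<ge> 1\<close>.\<close>

definition B :: real where "B = \<bar>U\<bar> + 1 + K * real N * \<gamma>^N"

definition pole :: "real \<Rightarrow> real" where "pole s = \<gamma>^N / s^N"

definition G :: "real \<Rightarrow> real" where "G s = iter_exp (m+1) (pole s + B)"

definition G' :: "real \<Rightarrow> real" where
  "G' s = iter_exp_prod (m+1) (pole s + B) * -(real N * \<gamma>^N / s^(N+1))"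

definition G'' :: "real \<Rightarrow> real" where
  "G'' s = iter_exp_prod_deriv (m+1) (pole s + B) * (real N * \<gamma>^N / s^(N+1))\<^sup>2
     + iter_exp_prod (m+1) (pole s + B) * (real N * (real N + 1) * \<gamma>^N / s^(N+2))"

lemma N_ge_1: "1 \<le> N"
  unfolding N_def by simp

lemma N_large: "2 / real N \<le> \<epsilon>"
proof -
  have "0 < 2 / \<epsilon>" using \<epsilon>_pos by simp
  then have "0 \<le> \<lceil>2 / \<epsilon>\<rceil>" by (subst zero_le_ceiling) linarith
  then have "2 / \<epsilon> \<le> real N" unfolding N_def using le_of_int_ceiling[of "2 / \<epsilon>"] by linarith
  then show ?thesis using \<epsilon>_pos N_ge_1 by (simp add: field_simps)
qed

lemma \<gamma>_ge_1: "1 \<le> \<gamma>" and K_C_le: "K * C \<le> \<gamma>\<^sup>2"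
proof -
  have KC: "0 \<le> K * C" unfolding C_def using K_pos by simp
  then show "1 \<le> \<gamma>" unfolding \<gamma>_def by simp
  have "K * C = (sqrt (K * C))\<^sup>2" using KC by simp
  also have "\<dots> \<le> \<gamma>\<^sup>2" unfolding \<gamma>_def using KC by (intro power_mono) auto
  finally show "K * C \<le> \<gamma>\<^sup>2" .
qed

lemma B_ge: "1 \<le> B" "U \<le> B" "K * real N * \<gamma>^N \<le> B"
proof -
  have "0 \<le> K * real N * \<gamma>^N" using K_pos \<gamma>_ge_1 by simp
  then show "1 \<le> B" "U \<le> B" "K * real N * \<gamma>^N \<le> B" unfolding B_def by linarith+
qed

lemma pole_pos: "0 < s \<Longrightarrow> 0 < pole s"
  unfolding pole_def using \<gamma>_ge_1 by simp

lemma G_has_derivatives: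
  assumes "0 < s"
  shows "(G has_real_derivative G' s) (at s)" "(G' has_real_derivative G'' s) (at s)" "isCont G'' s"
proof -
  define v where "v s = pole s + B" for s
  define v' where "v' s = -(real N * \<gamma>^N / s^(N+1))" for s :: real
  define v'' where "v'' s = real N * (real N + 1) * \<gamma>^N / s^(N+2)" for s :: real
  have "((\<lambda>s. \<gamma>^N / s^N + B) has_real_derivative v' s + 0) (at s)"
    unfolding v'_def using assms N_ge_1 by (intro DERIV_add DERIV_divide_power DERIV_const) auto
  then have v: "(v has_real_derivative v' s) (at s)" by (simp add: v_def[abs_def] pole_def[abs_def])
  have "(v' has_real_derivative -(-(real (N+1) * (real N * \<gamma>^N) / s^(N+1+1)))) (at s)"
    unfolding v'_def[abs_def] using assms by (intro DERIV_minus DERIV_divide_power) auto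
  then have v': "(v' has_real_derivative v'' s) (at s)" by (simp add: v''_def algebra_simps)
  have "isCont v'' s" unfolding v''_def[abs_def] using assms by (intro continuous_intros) auto
  note derivs = iter_exp_comp_has_derivatives[OF v v' this, of "m+1"]
  have "G = (\<lambda>s. iter_exp (m+1) (v s))" "G' = (\<lambda>s. iter_exp_prod (m+1) (v s) * v' s)"
    "G'' = (\<lambda>s. iter_exp_prod_deriv (m+1) (v s) * (v' s)\<^sup>2 + iter_exp_prod (m+1) (v s) * v'' s)"
    unfolding G_def G'_def G''_def v_def v'_def v''_def by (auto simp: fun_eq_iff power2_eq_square)
  then show "(G has_real_derivative G' s) (at s)" "(G' has_real_derivative G'' s) (at s)" "isCont G'' s"
    using derivs by simp_all
qed

lemma G_ge: "0 < s \<Longrightarrow> U \<le> G s \<and> iter_exp (m+1) 1 \<le> G s"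
  using pole_pos[of s] B_ge iter_exp_ge[of "pole s + B" "m+1"] iter_exp_mono[of 1 "pole s + B" "m+1"]
  unfolding G_def by auto

lemma iterlog_rate_G_ge:
  assumes "0 < s"
  defines "E \<equiv> iter_exp (m+1) (pole s + B) * (iter_exp_prod m (pole s + B))\<^sup>2 * (pole s + B)\<^sup>2"
  shows "E * (\<gamma> / s)\<^sup>2 \<le> iterlog_rate m \<epsilon> (G s)" and "E \<le> iterlog_rate m \<epsilon> (G s)"
proof -
  define v where "v = pole s + B"
  have v: "1 \<le> v" "0 < pole s" "pole s \<le> v" using pole_pos[OF assms(1)] B_ge unfolding v_def by auto
  have "pole s = (\<gamma> / s)^N" by (simp add: pole_def power_divide)
  moreover have "0 < \<gamma> / s" using assms \<gamma>_ge_1 by simp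
  ultimately have "v\<^sup>2 * (\<gamma> / s)\<^sup>2 \<le> v powr (2 + \<epsilon>)"
    by (rule powr_two_plus_ge[OF v(1,2,3) _ _ N_ge_1 N_large])
  moreover have "v\<^sup>2 \<le> v powr (2 + \<epsilon>)"
    using powr_mono[of 2 "2 + \<epsilon>" v] v(1) \<epsilon>_pos by simp
  moreover have "0 \<le> iter_exp (m+1) v * iter_exp_prod m v ^ 2"
    using iter_exp_ge[of v "m+1"] v(1) by simp
  ultimately show "E * (\<gamma> / s)\<^sup>2 \<le> iterlog_rate m \<epsilon> (G s)" "E \<le> iterlog_rate m \<epsilon> (G s)"
    unfolding E_def G_def iterlog_rate_iter_exp v_def[symmetric]
    by (metis mult.assoc mult_left_mono)+
qed

lemma G_derivatives_small:
  assumes s: "0 < s" "s \<le> 2"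
  shows "\<bar>G' s\<bar> + \<bar>G'' s\<bar> \<le> iterlog_rate m \<epsilon> (G s) / K"
proof -
  define v where "v = pole s + B"
  define a where "a = 1 / s"
  define E where "E = iter_exp (m+1) v"
  define P where "P = iter_exp_prod m v"
  have v: "1 \<le> v" "0 < pole s" "pole s \<le> v" using pole_pos[OF s(1)] B_ge unfolding v_def by auto
  have a: "0 < a" "1 \<le> 2 * a" unfolding a_def using s by auto
  have E: "1 \<le> E" and P: "1 \<le> P" unfolding E_def P_def using v(1)
    by (auto intro: iter_exp_ge_1 iter_exp_prod_ge_1)
  have P_Suc: "iter_exp_prod (m+1) v = P * E" unfolding P_def E_def by (simp add: iter_exp_prod_Suc)
  have d: "0 \<le> iter_exp_prod_deriv (m+1) v" "iter_exp_prod_deriv (m+1) v \<le> real (m+1) * (P * E) * P"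
    using iter_exp_prod_deriv_bounds[of v "m+1"] v(1) P_Suc unfolding P_def by auto
  have "\<bar>G' s\<bar> + \<bar>G'' s\<bar> = \<bar>(P * E) * (-(real N * a * pole s))\<bar>
      + \<bar>iter_exp_prod_deriv (m+1) v * (real N * a * pole s)\<^sup>2
         + (P * E) * (real N * (real N + 1) * a\<^sup>2 * pole s)\<bar>"
  proof -
    have "real N * \<gamma>^N / s^(N+1) = real N * a * pole s"
      "real N * (real N + 1) * \<gamma>^N / s^(N+2) = real N * (real N + 1) * a\<^sup>2 * pole s"
      unfolding a_def pole_def by (simp_all add: field_simps power2_eq_square)
    then show ?thesis unfolding G'_def G''_def v_def[symmetric] P_Suc by simp
  qed
  also have "\<dots> \<le> C * (E * P\<^sup>2 * v\<^sup>2 * a\<^sup>2)"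
    unfolding C_def by (rule barrier_derivative_bound[OF E P _ _ v(1) a _ _ d]) (use v in auto)
  also have "\<dots> \<le> (\<gamma>\<^sup>2 / K) * (E * P\<^sup>2 * v\<^sup>2 * a\<^sup>2)"
    using K_C_le K_pos E by (intro mult_right_mono) (auto simp: field_simps mult.commute)
  also have "\<dots> = (E * P\<^sup>2 * v\<^sup>2 * (\<gamma> / s)\<^sup>2) / K"
    unfolding a_def by (simp add: power_divide field_simps)
  also have "\<dots> \<le> iterlog_rate m \<epsilon> (G s) / K"
    using iterlog_rate_G_ge(1)[OF s(1)] K_pos unfolding E_def P_def v_def by (simp add: divide_right_mono)
  finally show ?thesis .
qed

lemma G'_large:
  assumes s: "1 \<le> s"
  shows "\<bar>G' s\<bar> \<le> iterlog_rate m \<epsilon> (G s) / K"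
proof -
  define v where "v = pole s + B"
  define E where "E = iter_exp (m+1) v"
  define P where "P = iter_exp_prod m v"
  have v: "1 \<le> v" "B \<le> v" using pole_pos[of s] s B_ge unfolding v_def by auto
  have E: "1 \<le> E" and P: "1 \<le> P" unfolding E_def P_def using v(1)
    by (auto intro: iter_exp_ge_1 iter_exp_prod_ge_1)
  define x where "x = real N * \<gamma>^N / s^(N+1)"
  have "1 \<le> s^(N+1)" using s by (rule one_le_power)
  then have "x \<le> real N * \<gamma>^N / 1" unfolding x_def using \<gamma>_ge_1 by (intro divide_left_mono) auto
  moreover have "0 \<le> x" unfolding x_def using s \<gamma>_ge_1 by simp
  ultimately have "K * \<bar>-x\<bar> \<le> K * (real N * \<gamma>^N)" using K_pos by (simp add: mult_left_mono)
  also have "\<dots> \<le> B" using B_ge(3) by (simp add: mult.assoc)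
  finally have Kx: "K * \<bar>-x\<bar> \<le> B" .
  have "G' s = (P * E) * -x"
    unfolding G'_def x_def v_def[symmetric] P_def E_def by (simp add: iter_exp_prod_Suc)
  then have "K * \<bar>G' s\<bar> = (P * E) * (K * \<bar>-x\<bar>)" using P E by (simp add: abs_mult mult_ac)
  also have "\<dots> \<le> P * E * B" using Kx P E by (intro mult_left_mono) auto
  also have "\<dots> \<le> E * P\<^sup>2 * v\<^sup>2"
  proof -
    have "v \<le> v\<^sup>2" using v by (simp add: power2_eq_square)
    then have "B \<le> v\<^sup>2" using v by linarith
    then have "P * B \<le> P\<^sup>2 * v\<^sup>2" using P v B_ge by (intro mult_mono) (auto simp: power2_eq_square)
    then show ?thesis using E by (simp add: mult_ac mult_left_mono)
  qed
  also have "\<dots> \<le> iterlog_rate m \<epsilon> (G s)"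
    using iterlog_rate_G_ge(2)[of s] s unfolding E_def P_def v_def by simp
  finally show ?thesis using K_pos by (simp add: field_simps)
qed

lemma G_blowup:
  assumes s: "0 < s" "s \<le> 1"
  shows "1 / s \<le> G s"
proof -
  have "1 \<le> \<gamma> / s" using s \<gamma>_ge_1 by (simp add: field_simps)
  have "1 / s \<le> \<gamma> / s" using s \<gamma>_ge_1 by (simp add: divide_right_mono)
  also have "\<dots> \<le> (\<gamma> / s)^N" using \<open>1 \<le> \<gamma> / s\<close> N_ge_1 by (metis power_one_right power_increasing)
  also have "\<dots> \<le> pole s + B" using B_ge by (simp add: pole_def power_divide)
  also have "\<dots> \<le> G s" unfolding G_def by (rule iter_exp_ge)
  finally show ?thesis .
qed

end

lemma barrier_profile_exists:
  fixes m :: nat and \<epsilon> K U :: real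
  assumes "0 < \<epsilon>" "0 < K"
  obtains G G' G'' :: "real \<Rightarrow> real" where
    "\<And>s. 0 < s \<Longrightarrow> (G has_real_derivative G' s) (at s)"
    "\<And>s. 0 < s \<Longrightarrow> (G' has_real_derivative G'' s) (at s)"
    "\<And>s. 0 < s \<Longrightarrow> isCont G'' s"
    "\<And>s. 0 < s \<Longrightarrow> U \<le> G s \<and> iter_exp (m+1) 1 \<le> G s"
    "\<And>s. 0 < s \<Longrightarrow> s \<le> 2 \<Longrightarrow> \<bar>G' s\<bar> + \<bar>G'' s\<bar> \<le> iterlog_rate m \<epsilon> (G s) / K"
    "\<And>s. 0 < s \<Longrightarrow> \<bar>G' s\<bar> \<le> iterlog_rate m \<epsilon> (G s) / K"
    "\<And>s. 0 < s \<Longrightarrow> s \<le> 1 \<Longrightarrow> 1 / s \<le> G s"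
proof -
  interpret barrier_profile m \<epsilon> K U using assms by unfold_locales
  have G'_bound: "\<bar>G' s\<bar> \<le> iterlog_rate m \<epsilon> (G s) / K" if "0 < s" for s
  proof (cases "s \<le> 2")
    case True
    then show ?thesis using G_derivatives_small[OF that] by linarith
  qed (use G'_large in simp)
  show ?thesis
    using G_has_derivatives G_ge G_derivatives_small G'_bound G_blowup by (rule that)
qed

definition open_cube :: "real^'n::finite \<Rightarrow> (real^'n) set" where
  "open_cube x\<^sub>0 = {x. \<forall>i. \<bar>x$i - x\<^sub>0$i\<bar> < 1}"

lemma open_open_cube:
  fixes x\<^sub>0 :: "real^'n::finite"
  shows "open (open_cube x\<^sub>0)"
proof -
  have "open_cube x\<^sub>0 = (\<Inter>i\<in>UNIV. {x. \<bar>x$i - x\<^sub>0$i\<bar> < 1})" unfolding open_cube_def by auto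
  moreover have "open {x::real^'n. \<bar>x$i - x\<^sub>0$i\<bar> < 1}" for i
    by (intro open_Collect_less continuous_intros)
  ultimately show ?thesis by (simp add: open_INT)
qed

lemma center_in_open_cube: "x\<^sub>0 \<in> open_cube x\<^sub>0"
  unfolding open_cube_def by simp

lemma dist_le_card_if_coordinates_le_1:
  fixes x x\<^sub>0 :: "real^'n::finite"
  assumes "\<And>i. \<bar>x$i - x\<^sub>0$i\<bar> \<le> 1"
  shows "dist x\<^sub>0 x \<le> real CARD('n)"
proof -
  have "norm (x - x\<^sub>0) \<le> (\<Sum>i\<in>UNIV. \<bar>(x - x\<^sub>0)$i\<bar>)" by (rule norm_le_l1_cart)
  also have "\<dots> \<le> (\<Sum>i\<in>(UNIV::'n set). 1)" by (rule sum_mono) (use assms in auto)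
  finally show ?thesis by (simp add: dist_norm norm_minus_commute)
qed

lemma open_cube_subset_cball:
  fixes x\<^sub>0 :: "real^'n::finite"
  shows "open_cube x\<^sub>0 \<subseteq> cball x\<^sub>0 (real CARD('n))"
proof
  fix x assume "x \<in> open_cube x\<^sub>0"
  then have "\<bar>x$i - x\<^sub>0$i\<bar> \<le> 1" for i unfolding open_cube_def by (simp add: less_imp_le)
  then show "x \<in> cball x\<^sub>0 (real CARD('n))" using dist_le_card_if_coordinates_le_1[of x x\<^sub>0] by simp
qed

lemma nonpos_if_neg_on_left:
  fixes f :: "real \<Rightarrow> real"
  assumes "isCont f t" "a < t" "\<And>s. a < s \<Longrightarrow> s < t \<Longrightarrow> f s < 0"
  shows "f t \<le> 0"
proof (rule tendsto_upperbound)
  show "(f \<longlongrightarrow> f t) (at_left t)" using assms(1) by (simp add: isCont_def filterlim_at_split)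
  show "\<forall>\<^sub>F s in at_left t. f s \<le> 0"
    using assms(2,3) by (auto simp: eventually_at_left_field intro: less_imp_le)
qed simp

lemma DERIV_nonneg_if_neg_on_left:
  fixes f :: "real \<Rightarrow> real"
  assumes "(f has_real_derivative D) (at t)" "f t = 0" "a < t" "\<And>s. a < s \<Longrightarrow> s < t \<Longrightarrow> f s < 0"
  shows "0 \<le> D"
proof (rule ccontr)
  assume "\<not> 0 \<le> D"
  then obtain d where d: "0 < d" "\<And>h. 0 < h \<Longrightarrow> h < d \<Longrightarrow> f t < f (t - h)"
    using DERIV_neg_dec_left[OF assms(1)] by force
  define h where "h = min d (t - a) / 2"
  have "2 * h \<le> d" "2 * h \<le> t - a" "0 < h" unfolding h_def using d assms(3) by auto
  then have "0 < h" "h < d" "a < t - h" "t - h < t" using d(1) assms(3) by linarith+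
  then show False using d(2) assms(2) assms(4)[of "t - h"] by force
qed

text \<open>The point is that \<open>u\<close> is bounded on the compact set \<open>cball x\<^sub>0 CARD('n) \<times> {0..T}\<close>.\<close>

lemma below_barrier_near_parabolic_boundary:
  fixes u W :: "real^'n::finite \<Rightarrow> real \<Rightarrow> real" and x\<^sub>0 :: "real^'n"
  defines "Q \<equiv> open_cube x\<^sub>0"
  assumes u: "continuous_on (UNIV \<times> {0..}) (\<lambda>(x, t). u x t)"
    and blowup: "\<forall>V. \<exists>\<delta>>0. \<forall>x\<in>Q. \<forall>t>0. (t \<le> \<delta> \<or> (\<exists>i. 1 - \<bar>x$i - x\<^sub>0$i\<bar> \<le> \<delta>)) \<longrightarrow> V < W x t"
    and "0 < T"
  obtains \<delta> where "0 < \<delta>" "\<delta> < T" "\<delta> < 1"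
    "\<And>x t. x \<in> Q \<Longrightarrow> 0 < t \<Longrightarrow> t \<le> T \<Longrightarrow> t \<le> \<delta> \<or> (\<exists>i. 1 - \<bar>x$i - x\<^sub>0$i\<bar> \<le> \<delta>) \<Longrightarrow> u x t < W x t"
proof -
  define n where "n = real CARD('n)"
  have "compact (cball x\<^sub>0 n \<times> {0..T})" by (intro compact_Times compact_cball compact_Icc)
  moreover have "continuous_on (cball x\<^sub>0 n \<times> {0..T}) (\<lambda>(x, t). u x t)"
    by (rule continuous_on_subset[OF u]) auto
  ultimately have "bounded ((\<lambda>(x, t). u x t) ` (cball x\<^sub>0 n \<times> {0..T}))"
    by (intro compact_imp_bounded compact_continuous_image)
  then obtain M where "\<And>p. p \<in> cball x\<^sub>0 n \<times> {0..T} \<Longrightarrow> norm ((\<lambda>(x, t). u x t) p) \<le> M"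
    unfolding bounded_iff by blast
  then have uM: "u x t \<le> M" if "x \<in> Q" "0 \<le> t" "t \<le> T" for x t
    using that open_cube_subset_cball[of x\<^sub>0] unfolding Q_def n_def by fastforce
  obtain \<delta>\<^sub>0 where \<delta>\<^sub>0: "\<delta>\<^sub>0 > 0" "\<forall>x\<in>Q. \<forall>t>0. (t \<le> \<delta>\<^sub>0 \<or> (\<exists>i. 1 - \<bar>x$i - x\<^sub>0$i\<bar> \<le> \<delta>\<^sub>0)) \<longrightarrow> M < W x t"
    using blowup by blast
  define \<delta> where "\<delta> = min \<delta>\<^sub>0 (min (T / 2) (1 / 2))"
  have \<delta>: "0 < \<delta>" "\<delta> \<le> \<delta>\<^sub>0" "\<delta> < T" "\<delta> < 1" unfolding \<delta>_def using \<delta>\<^sub>0 \<open>0 < T\<close> by auto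
  have "u x t < W x t"
    if "x \<in> Q" "0 < t" "t \<le> T" "t \<le> \<delta> \<or> (\<exists>i. 1 - \<bar>x$i - x\<^sub>0$i\<bar> \<le> \<delta>)" for x t
  proof -
    have "t \<le> \<delta>\<^sub>0 \<or> (\<exists>i. 1 - \<bar>x$i - x\<^sub>0$i\<bar> \<le> \<delta>\<^sub>0)" using that(4) \<delta>(2) by (meson order_trans)
    then have "M < W x t" using \<delta>\<^sub>0(2) that(1,2) by blast
    moreover have "u x t \<le> M" using uM that by simp
    ultimately show ?thesis by simp
  qed
  then show ?thesis using that \<delta>(1,3,4) by blast
qed

text \<open>By the previous lemma, \<open>u\<close> can reach \<open>W\<close> only on a compact subcube and after a
  positive time, so the set of such times has a least element.\<close>

lemma first_touching_time:
  fixes u W :: "real^'n::finite \<Rightarrow> real \<Rightarrow> real" and x\<^sub>0 :: "real^'n"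
  defines "Q \<equiv> open_cube x\<^sub>0"
  assumes u: "continuous_on (UNIV \<times> {0..}) (\<lambda>(x, t). u x t)"
    and W: "continuous_on (Q \<times> {0<..}) (\<lambda>(x, t). W x t)"
    and blowup: "\<forall>V. \<exists>\<delta>>0. \<forall>x\<in>Q. \<forall>t>0. (t \<le> \<delta> \<or> (\<exists>i. 1 - \<bar>x$i - x\<^sub>0$i\<bar> \<le> \<delta>)) \<longrightarrow> V < W x t"
    and bad: "x\<^sub>1 \<in> Q" "0 < t\<^sub>1" "W x\<^sub>1 t\<^sub>1 < u x\<^sub>1 t\<^sub>1"
  shows "\<exists>x\<^sub>s t\<^sub>s. x\<^sub>s \<in> Q \<and> 0 < t\<^sub>s \<and> W x\<^sub>s t\<^sub>s \<le> u x\<^sub>s t\<^sub>s \<and>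
           (\<forall>x\<in>Q. \<forall>t. 0 < t \<and> t < t\<^sub>s \<longrightarrow> u x t < W x t)"
proof -
  obtain \<delta> where \<delta>: "0 < \<delta>" "\<delta> < t\<^sub>1" "\<delta> < 1"
    and near_boundary: "\<And>x t. x \<in> Q \<Longrightarrow> 0 < t \<Longrightarrow> t \<le> t\<^sub>1 \<Longrightarrow>
      t \<le> \<delta> \<or> (\<exists>i. 1 - \<bar>x$i - x\<^sub>0$i\<bar> \<le> \<delta>) \<Longrightarrow> u x t < W x t"
    using below_barrier_near_parabolic_boundary[OF u blowup[unfolded Q_def] bad(2)] unfolding Q_def by blast
  define K where "K = {x. \<forall>i. \<bar>x$i - x\<^sub>0$i\<bar> \<le> 1 - \<delta>}"
  have KQ: "K \<subseteq> Q"
  proof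
    fix x assume "x \<in> K"
    have "\<bar>x$i - x\<^sub>0$i\<bar> < 1" for i
    proof -
      have "\<bar>x$i - x\<^sub>0$i\<bar> \<le> 1 - \<delta>" using \<open>x \<in> K\<close> unfolding K_def by blast
      then show ?thesis using \<delta>(1) by linarith
    qed
    then show "x \<in> Q" unfolding Q_def open_cube_def by simp
  qed
  have not_K: "\<exists>i. 1 - \<bar>x$i - x\<^sub>0$i\<bar> \<le> \<delta>" if x: "x \<notin> K" for x
  proof -
    obtain i where "\<not> \<bar>x$i - x\<^sub>0$i\<bar> \<le> 1 - \<delta>" using x unfolding K_def by blast
    then show ?thesis by (intro exI[of _ i]) linarith
  qed
  have "closed K" unfolding K_def by (intro closed_Collect_all closed_Collect_le continuous_intros)
  moreover have "bounded K" using KQ open_cube_subset_cball[of x\<^sub>0] unfolding Q_def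
    by (meson bounded_cball bounded_subset subset_trans)
  ultimately have cK: "compact (K \<times> {\<delta>..t\<^sub>1})" by (intro compact_Times) (simp_all add: compact_eq_bounded_closed)
  have diff: "continuous_on (K \<times> {\<delta>..t\<^sub>1}) (\<lambda>p. u (fst p) (snd p) - W (fst p) (snd p))"
  proof -
    have "K \<times> {\<delta>..t\<^sub>1} \<subseteq> UNIV \<times> {0..}" "K \<times> {\<delta>..t\<^sub>1} \<subseteq> Q \<times> {0<..}" using KQ \<delta>(1) by auto
    from continuous_on_diff[OF continuous_on_subset[OF u this(1)] continuous_on_subset[OF W this(2)]]
    show ?thesis by (simp add: case_prod_beta)
  qed
  define Z where "Z = (K \<times> {\<delta>..t\<^sub>1}) \<inter> (\<lambda>p. u (fst p) (snd p) - W (fst p) (snd p)) -` {0..}"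
  have "closed Z" unfolding Z_def
    by (rule continuous_closed_preimage[OF diff compact_imp_closed[OF cK] closed_atLeast])
  moreover have "(K \<times> {\<delta>..t\<^sub>1}) \<inter> Z = Z" unfolding Z_def by blast
  ultimately have "compact Z" using compact_Int_closed[OF cK] by metis
  then have "compact (snd ` Z)" by (intro compact_continuous_image continuous_intros)
  moreover have "t\<^sub>1 \<in> snd ` Z"
  proof -
    have "x\<^sub>1 \<in> K"
    proof (rule ccontr)
      assume "x\<^sub>1 \<notin> K"
      then have "u x\<^sub>1 t\<^sub>1 < W x\<^sub>1 t\<^sub>1" using near_boundary[OF bad(1,2) order_refl] not_K by blast
      with bad(3) show False by simp
    qed
    then have "(x\<^sub>1, t\<^sub>1) \<in> Z" using bad \<delta> unfolding Z_def by auto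
    then show ?thesis by force
  qed
  ultimately obtain t\<^sub>s where t\<^sub>s: "t\<^sub>s \<in> snd ` Z" and least: "\<And>t. t \<in> snd ` Z \<Longrightarrow> t\<^sub>s \<le> t"
    using compact_attains_inf by (metis empty_iff)
  then obtain x\<^sub>s where x\<^sub>s: "x\<^sub>s \<in> K" "\<delta> \<le> t\<^sub>s" "t\<^sub>s \<le> t\<^sub>1" "W x\<^sub>s t\<^sub>s \<le> u x\<^sub>s t\<^sub>s"
    unfolding Z_def by force
  have "u x t < W x t" if "x \<in> Q" "0 < t" "t < t\<^sub>s" for x t
  proof (cases "t \<le> \<delta> \<or> x \<notin> K")
    case True
    then have "t \<le> \<delta> \<or> (\<exists>i. 1 - \<bar>x$i - x\<^sub>0$i\<bar> \<le> \<delta>)" using not_K by blast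
    moreover have "t \<le> t\<^sub>1" using that(3) x\<^sub>s(3) by linarith
    ultimately show ?thesis using near_boundary[OF that(1,2)] by blast
  next
    case False
    show ?thesis
    proof (rule ccontr)
      assume "\<not> u x t < W x t"
      then have "(x, t) \<in> Z" using False that x\<^sub>s unfolding Z_def by auto
      then have "t \<in> snd ` Z" by force
      then show False using least that by force
    qed
  qed
  then show ?thesis using x\<^sub>s KQ \<delta>(1) by (intro exI[of _ x\<^sub>s] exI[of _ t\<^sub>s]) auto
qed

lemma continuous_on_time_slice:
  assumes "continuous_on (UNIV \<times> {0<..}) (\<lambda>(x, t). F x t)" "0 < t"
  shows "continuous_on S (\<lambda>x. F x t)"
proof -
  have "continuous_on S (\<lambda>x. (\<lambda>(x, t). F x t) (x, t))"
    by (rule continuous_on_compose2[OF assms(1)]) (use assms(2) in \<open>auto intro!: continuous_intros\<close>)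
  then show ?thesis by simp
qed

text \<open>At a first touching point, \<open>u - W\<close> has a spatial maximum \<open>0\<close> and does not decrease in
  time, which contradicts the strict supersolution inequality for \<open>W\<close>.\<close>

lemma comparison_on_cube:
  fixes a :: "'n::finite \<Rightarrow> 'n \<Rightarrow> real^'n \<Rightarrow> real" and b :: "'n \<Rightarrow> real^'n \<Rightarrow> real"
    and f u W W\<^sub>t :: "real^'n \<Rightarrow> real \<Rightarrow> real" and x\<^sub>0 :: "real^'n"
  defines "Q \<equiv> open_cube x\<^sub>0"
  assumes sol: "classical_solution a b f g u" and ell: "elliptic_pointwise a"
    and W: "continuous_on (Q \<times> {0<..}) (\<lambda>(x, t). W x t)"
    and W\<^sub>t: "\<And>x t. x \<in> Q \<Longrightarrow> 0 < t \<Longrightarrow> ((\<lambda>s. W x s) has_real_derivative W\<^sub>t x t) (at t)"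
    and DW: "\<And>t. 0 < t \<Longrightarrow> has_partials_on (\<lambda>x. W x t) (\<lambda>i x. DW i x t) Q"
    and D2W: "\<And>t j. 0 < t \<Longrightarrow> has_partials_on (\<lambda>x. DW j x t) (\<lambda>i x. D2W i j x t) Q"
    and DW_cont: "\<And>t i. 0 < t \<Longrightarrow> continuous_on Q (\<lambda>x. DW i x t)"
    and D2W_cont: "\<And>t i j. 0 < t \<Longrightarrow> continuous_on Q (\<lambda>x. D2W i j x t)"
    and super: "\<And>x t. x \<in> Q \<Longrightarrow> 0 < t \<Longrightarrow>
      (\<Sum>i\<in>UNIV. \<Sum>j\<in>UNIV. a i j x * D2W i j x t) + (\<Sum>i\<in>UNIV. b i x * DW i x t) + f x (W x t) < W\<^sub>t x t"
    and blowup: "\<forall>V. \<exists>\<delta>>0. \<forall>x\<in>Q. \<forall>t>0. (t \<le> \<delta> \<or> (\<exists>i. 1 - \<bar>x$i - x\<^sub>0$i\<bar> \<le> \<delta>)) \<longrightarrow> V < W x t"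
    and "x \<in> Q" "0 < t"
  shows "u x t \<le> W x t"
proof (rule ccontr)
  assume "\<not> u x t \<le> W x t"
  from sol obtain Du D2u Dt where
    u: "continuous_on (UNIV \<times> {0..}) (\<lambda>(x, t). u x t)"
    and pde: "\<forall>x. \<forall>t>0.
            ((\<lambda>s. u x s) has_real_derivative Dt x t) (at t) \<and>
            (\<forall>i. ((\<lambda>h. u (x + h *\<^sub>R axis i 1) t) has_real_derivative Du i x t) (at 0)) \<and>
            (\<forall>i j. ((\<lambda>h. Du j (x + h *\<^sub>R axis i 1) t) has_real_derivative D2u i j x t) (at 0)) \<and>
            Dt x t = (\<Sum>i\<in>UNIV. \<Sum>j\<in>UNIV. a i j x * D2u i j x t)
                     + (\<Sum>i\<in>UNIV. b i x * Du i x t) + f x (u x t)"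
    and Du_cont: "\<forall>i. continuous_on (UNIV \<times> {0<..}) (\<lambda>(x, t). Du i x t)"
    and D2u_cont: "\<forall>i j. continuous_on (UNIV \<times> {0<..}) (\<lambda>(x, t). D2u i j x t)"
    unfolding classical_solution_def by blast
  obtain x\<^sub>s t\<^sub>s where x\<^sub>s: "x\<^sub>s \<in> Q" and t\<^sub>s: "0 < t\<^sub>s" and touch: "W x\<^sub>s t\<^sub>s \<le> u x\<^sub>s t\<^sub>s"
    and below: "\<And>y s. y \<in> Q \<Longrightarrow> 0 < s \<Longrightarrow> s < t\<^sub>s \<Longrightarrow> u y s < W y s"
    using first_touching_time[OF u W[unfolded Q_def] blowup[unfolded Q_def]] \<open>x \<in> Q\<close> \<open>0 < t\<close>
      \<open>\<not> u x t \<le> W x t\<close> unfolding Q_def by (metis not_le)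
  define w where "w y s = u y s - W y s" for y s
  have w_deriv: "((\<lambda>s. w y s) has_real_derivative Dt y s - W\<^sub>t y s) (at s)" if "y \<in> Q" "0 < s" for y s
  proof -
    have "((\<lambda>s. u y s) has_real_derivative Dt y s) (at s)" using pde that(2) by blast
    from DERIV_diff[OF this W\<^sub>t[OF that]] show ?thesis unfolding w_def .
  qed
  have max: "w y t\<^sub>s \<le> 0" if "y \<in> Q" for y
    using nonpos_if_neg_on_left[OF DERIV_isCont[OF w_deriv[OF that t\<^sub>s]] t\<^sub>s] below[OF that]
    unfolding w_def by simp
  then have "w x\<^sub>s t\<^sub>s = 0" using x\<^sub>s touch unfolding w_def by force
  then have "0 \<le> Dt x\<^sub>s t\<^sub>s - W\<^sub>t x\<^sub>s t\<^sub>s"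
    using DERIV_nonneg_if_neg_on_left[OF w_deriv[OF x\<^sub>s t\<^sub>s] _ t\<^sub>s] below[OF x\<^sub>s] unfolding w_def by simp
  define D1 where "D1 i y = Du i y t\<^sub>s - DW i y t\<^sub>s" for i y
  define D2 where "D2 i j y = D2u i j y t\<^sub>s - D2W i j y t\<^sub>s" for i j y
  have D1: "has_partials_on (\<lambda>y. w y t\<^sub>s) D1 Q"
    using pde DW[OF t\<^sub>s] t\<^sub>s unfolding has_partials_on_def w_def D1_def by (auto intro: DERIV_diff)
  have D2: "has_partials_on (D1 j) (\<lambda>i. D2 i j) Q" for j
    using pde D2W[OF t\<^sub>s] t\<^sub>s unfolding has_partials_on_def D1_def D2_def by (auto intro: DERIV_diff)
  have "continuous_on Q (D1 i)" for i
    unfolding D1_def using continuous_on_time_slice[OF Du_cont[rule_format] t\<^sub>s] DW_cont[OF t\<^sub>s]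
    by (intro continuous_on_diff)
  moreover have "continuous_on Q (D2 i j)" for i j
    unfolding D2_def using continuous_on_time_slice[OF D2u_cont[rule_format] t\<^sub>s] D2W_cont[OF t\<^sub>s]
    by (intro continuous_on_diff)
  moreover have "\<forall>y\<in>Q. w y t\<^sub>s \<le> w x\<^sub>s t\<^sub>s" using max \<open>w x\<^sub>s t\<^sub>s = 0\<close> by simp
  moreover note cube = open_open_cube[of x\<^sub>0, folded Q_def] x\<^sub>s
  ultimately have grad: "Du i x\<^sub>s t\<^sub>s = DW i x\<^sub>s t\<^sub>s"
    and hess: "(\<Sum>i\<in>UNIV. \<Sum>j\<in>UNIV. a i j x\<^sub>s * D2 i j x\<^sub>s) \<le> 0" for i
    using local_max_partials_zero[OF cube _ D1, of i]
      elliptic_sum_at_local_max_nonpos[OF cube _ D1 _ D2 _ elliptic_pointwise_quad_form_nonneg[OF ell]]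
    unfolding D1_def by auto
  have "Dt x\<^sub>s t\<^sub>s = (\<Sum>i\<in>UNIV. \<Sum>j\<in>UNIV. a i j x\<^sub>s * D2u i j x\<^sub>s t\<^sub>s)
      + (\<Sum>i\<in>UNIV. b i x\<^sub>s * Du i x\<^sub>s t\<^sub>s) + f x\<^sub>s (u x\<^sub>s t\<^sub>s)"
    using pde t\<^sub>s by blast
  also have "\<dots> = (\<Sum>i\<in>UNIV. \<Sum>j\<in>UNIV. a i j x\<^sub>s * D2 i j x\<^sub>s)
      + ((\<Sum>i\<in>UNIV. \<Sum>j\<in>UNIV. a i j x\<^sub>s * D2W i j x\<^sub>s t\<^sub>s) + (\<Sum>i\<in>UNIV. b i x\<^sub>s * DW i x\<^sub>s t\<^sub>s)
         + f x\<^sub>s (W x\<^sub>s t\<^sub>s))"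
    using \<open>w x\<^sub>s t\<^sub>s = 0\<close> grad unfolding D2_def w_def by (simp add: right_diff_distrib sum_subtractf)
  also have "\<dots> < W\<^sub>t x\<^sub>s t\<^sub>s" using hess super[OF x\<^sub>s t\<^sub>s] by linarith
  finally show False using \<open>0 \<le> Dt x\<^sub>s t\<^sub>s - W\<^sub>t x\<^sub>s t\<^sub>s\<close> by simp
qed

text \<open>The arguments \<open>1 - (x$i - x\<^sub>0$i)\<close> and \<open>1 + (x$i - x\<^sub>0$i)\<close> are the distances from \<open>x\<close>
  to the faces of \<open>open_cube x\<^sub>0\<close>.\<close>

definition cube_barrier :: "(real \<Rightarrow> real) \<Rightarrow> real^'n::finite \<Rightarrow> real^'n \<Rightarrow> real \<Rightarrow> real" where
  "cube_barrier G x\<^sub>0 x t = G t + (\<Sum>i\<in>UNIV. G (1 - (x$i - x\<^sub>0$i)) + G (1 + (x$i - x\<^sub>0$i)))"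

definition cube_barrier_grad :: "(real \<Rightarrow> real) \<Rightarrow> real^'n::finite \<Rightarrow> 'n \<Rightarrow> real^'n \<Rightarrow> real" where
  "cube_barrier_grad G' x\<^sub>0 i x = - G' (1 - (x$i - x\<^sub>0$i)) + G' (1 + (x$i - x\<^sub>0$i))"

definition cube_barrier_hess :: "(real \<Rightarrow> real) \<Rightarrow> real^'n::finite \<Rightarrow> 'n \<Rightarrow> 'n \<Rightarrow> real^'n \<Rightarrow> real" where
  "cube_barrier_hess G'' x\<^sub>0 i j x = (if i = j then G'' (1 - (x$i - x\<^sub>0$i)) + G'' (1 + (x$i - x\<^sub>0$i)) else 0)"

lemma open_cube_face_distances:
  "x \<in> open_cube x\<^sub>0 \<Longrightarrow> 0 < 1 - (x$i - x\<^sub>0$i) \<and> 1 - (x$i - x\<^sub>0$i) \<le> 2 \<and>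
     0 < 1 + (x$i - x\<^sub>0$i) \<and> 1 + (x$i - x\<^sub>0$i) \<le> 2"
  unfolding open_cube_def by (auto dest!: spec[of _ i])

lemma DERIV_face_distance:
  assumes F: "\<And>s. 0 < s \<Longrightarrow> (F has_real_derivative F' s) (at s)" and y: "\<bar>y\<bar> < 1"
  shows "((\<lambda>h. F (1 - (y + h * c))) has_real_derivative F' (1 - y) * - c) (at 0)"
    and "((\<lambda>h. F (1 + (y + h * c))) has_real_derivative F' (1 + y) * c) (at 0)"
proof -
  have F1: "(F has_real_derivative F' (1 - y)) (at (1 - (y + 0 * c)))"
    and F2: "(F has_real_derivative F' (1 + y)) (at (1 + (y + 0 * c)))"
    using F y by simp_all
  have "((\<lambda>h. 1 - (y + h * c)) has_real_derivative - c) (at 0)"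
    by (auto intro!: derivative_eq_intros)
  from DERIV_chain2[OF F1 this]
  show "((\<lambda>h. F (1 - (y + h * c))) has_real_derivative F' (1 - y) * - c) (at 0)" .
  have "((\<lambda>h. 1 + (y + h * c)) has_real_derivative c) (at 0)"
    by (auto intro!: derivative_eq_intros)
  from DERIV_chain2[OF F2 this]
  show "((\<lambda>h. F (1 + (y + h * c))) has_real_derivative F' (1 + y) * c) (at 0)" .
qed

lemma cube_barrier_derivatives:
  fixes G G' G'' :: "real \<Rightarrow> real" and x\<^sub>0 :: "real^'n::finite"
  assumes G: "\<And>s. 0 < s \<Longrightarrow> (G has_real_derivative G' s) (at s)"
    and G': "\<And>s. 0 < s \<Longrightarrow> (G' has_real_derivative G'' s) (at s)"
    and G'': "\<And>s. 0 < s \<Longrightarrow> isCont G'' s"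
  shows "continuous_on (open_cube x\<^sub>0 \<times> {0<..}) (\<lambda>(x, t). cube_barrier G x\<^sub>0 x t)"
    and "x \<in> open_cube x\<^sub>0 \<Longrightarrow> 0 < t \<Longrightarrow> ((\<lambda>s. cube_barrier G x\<^sub>0 x s) has_real_derivative G' t) (at t)"
    and "has_partials_on (\<lambda>x. cube_barrier G x\<^sub>0 x t) (cube_barrier_grad G' x\<^sub>0) (open_cube x\<^sub>0)"
    and "has_partials_on (cube_barrier_grad G' x\<^sub>0 j) (\<lambda>i. cube_barrier_hess G'' x\<^sub>0 i j) (open_cube x\<^sub>0)"
    and "continuous_on (open_cube x\<^sub>0) (cube_barrier_grad G' x\<^sub>0 i)"
    and "continuous_on (open_cube x\<^sub>0) (cube_barrier_hess G'' x\<^sub>0 i j)"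
proof -
  have cont: "continuous_on {0<..} H" if "\<And>s. 0 < s \<Longrightarrow> isCont H s" for H
    using that by (intro continuous_at_imp_continuous_on) auto
  have face: "continuous_on S (\<lambda>p. H (1 - ((g p)$i - x\<^sub>0$i)))" "continuous_on S (\<lambda>p. H (1 + ((g p)$i - x\<^sub>0$i)))"
    if "continuous_on {0<..} H" "continuous_on S g" "\<And>p. p \<in> S \<Longrightarrow> g p \<in> open_cube x\<^sub>0" for H S i
    and g :: "'a::topological_space \<Rightarrow> real^'n"
    using open_cube_face_distances[OF that(3)]
    by (auto intro!: continuous_on_compose2[OF that(1)] continuous_intros that(2))
  have cG: "continuous_on {0<..} G" "continuous_on {0<..} G'" "continuous_on {0<..} G''"
    using G G' G'' DERIV_isCont by (blast intro: cont)+
  have "continuous_on (open_cube x\<^sub>0 \<times> {0<..})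
      (\<lambda>p. G (snd p) + (\<Sum>i\<in>UNIV. G (1 - ((fst p)$i - x\<^sub>0$i)) + G (1 + ((fst p)$i - x\<^sub>0$i))))"
    by (intro continuous_on_add continuous_on_sum face cG continuous_intros
        continuous_on_compose2[OF cG(1)]) auto
  then show "continuous_on (open_cube x\<^sub>0 \<times> {0<..}) (\<lambda>(x, t). cube_barrier G x\<^sub>0 x t)"
    unfolding cube_barrier_def by (simp add: case_prod_beta)
  show "((\<lambda>s. cube_barrier G x\<^sub>0 x s) has_real_derivative G' t) (at t)" if "0 < t"
    unfolding cube_barrier_def using G[OF that] by (auto intro!: derivative_eq_intros)
  have axis: "(x + h *\<^sub>R axis i 1)$k - x\<^sub>0$k = (x$k - x\<^sub>0$k) + h * (if k = i then 1 else 0)" for x h i k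
    by (simp add: axis_def)
  have in_cube: "\<bar>x$k - x\<^sub>0$k\<bar> < 1" if "x \<in> open_cube x\<^sub>0" for x k
    using that unfolding open_cube_def by blast
  show "has_partials_on (\<lambda>x. cube_barrier G x\<^sub>0 x t) (cube_barrier_grad G' x\<^sub>0) (open_cube x\<^sub>0)"
    unfolding has_partials_on_def
  proof (intro ballI allI)
    fix x i assume x: "x \<in> open_cube x\<^sub>0"
    have "((\<lambda>h. G t + (\<Sum>k\<in>UNIV. G (1 - ((x$k - x\<^sub>0$k) + h * (if k = i then 1 else 0)))
          + G (1 + ((x$k - x\<^sub>0$k) + h * (if k = i then 1 else 0)))))
        has_real_derivative 0 + (\<Sum>k\<in>UNIV. G' (1 - (x$k - x\<^sub>0$k)) * - (if k = i then 1 else 0)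
          + G' (1 + (x$k - x\<^sub>0$k)) * (if k = i then 1 else 0))) (at 0)"
      using in_cube[OF x] by (intro DERIV_add DERIV_const DERIV_sum DERIV_face_distance G)
    then show "((\<lambda>h. cube_barrier G x\<^sub>0 (x + h *\<^sub>R axis i 1) t) has_real_derivative
        cube_barrier_grad G' x\<^sub>0 i x) (at 0)"
      unfolding cube_barrier_def cube_barrier_grad_def axis by (simp add: if_distrib cong: if_cong)
  qed
  show "has_partials_on (cube_barrier_grad G' x\<^sub>0 j) (\<lambda>i. cube_barrier_hess G'' x\<^sub>0 i j) (open_cube x\<^sub>0)"
    unfolding has_partials_on_def
  proof (intro ballI allI)
    fix x i assume x: "x \<in> open_cube x\<^sub>0"
    have "((\<lambda>h. - G' (1 - ((x$j - x\<^sub>0$j) + h * (if j = i then 1 else 0)))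
          + G' (1 + ((x$j - x\<^sub>0$j) + h * (if j = i then 1 else 0))))
        has_real_derivative - (G'' (1 - (x$j - x\<^sub>0$j)) * - (if j = i then 1 else 0))
          + G'' (1 + (x$j - x\<^sub>0$j)) * (if j = i then 1 else 0)) (at 0)"
      using in_cube[OF x] by (intro DERIV_add DERIV_minus DERIV_face_distance G')
    then show "((\<lambda>h. cube_barrier_grad G' x\<^sub>0 j (x + h *\<^sub>R axis i 1)) has_real_derivative
        cube_barrier_hess G'' x\<^sub>0 i j x) (at 0)"
      unfolding cube_barrier_grad_def cube_barrier_hess_def axis by (cases "i = j") auto
  qed
  show "continuous_on (open_cube x\<^sub>0) (cube_barrier_grad G' x\<^sub>0 i)"
    unfolding cube_barrier_grad_def[abs_def]
    by (intro continuous_on_add continuous_on_minus face cG continuous_on_id) auto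
  show "continuous_on (open_cube x\<^sub>0) (cube_barrier_hess G'' x\<^sub>0 i j)"
    unfolding cube_barrier_hess_def[abs_def]
    by (cases "i = j") (auto intro!: continuous_on_add face cG continuous_on_id)
qed

lemma mult_le_bound_mult_abs:
  fixes p X :: real
  assumes "\<bar>p\<bar> \<le> A"
  shows "p * X \<le> A * \<bar>X\<bar>"
proof -
  have "p * X \<le> \<bar>p\<bar> * \<bar>X\<bar>" by (metis abs_ge_self abs_mult)
  also have "\<dots> \<le> A * \<bar>X\<bar>" using assms by (intro mult_right_mono) auto
  finally show ?thesis .
qed

text \<open>The diffusion and drift terms at a face contribute at most a quarter of the absorption of
  that face term, \<open>G'\<close> is at most a quarter of the absorption of \<open>G t\<close>, and the absorption of
  the whole barrier dominates the sum of these by superadditivity.\<close>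

lemma cube_barrier_supersolution:
  fixes a :: "'n::finite \<Rightarrow> 'n \<Rightarrow> real^'n \<Rightarrow> real" and b :: "'n \<Rightarrow> real^'n \<Rightarrow> real"
    and f :: "real^'n \<Rightarrow> real \<Rightarrow> real" and G G' G'' :: "real \<Rightarrow> real"
  assumes \<epsilon>: "0 < \<epsilon>" and A: "0 \<le> A"
    and a: "\<And>i j. \<bar>a i j x\<bar> \<le> A" and b: "\<And>i. \<bar>b i x\<bar> \<le> A"
    and f: "\<And>u. U \<le> u \<Longrightarrow> f x u \<le> - iterlog_rate m \<epsilon> u"
    and G: "\<And>s. 0 < s \<Longrightarrow> U \<le> G s \<and> iter_exp (m+1) 1 \<le> G s"
    and G_small: "\<And>s. 0 < s \<Longrightarrow> s \<le> 2 \<Longrightarrow> \<bar>G' s\<bar> + \<bar>G'' s\<bar> \<le> iterlog_rate m \<epsilon> (G s) / (4 * (A + 1))"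
    and G': "\<And>s. 0 < s \<Longrightarrow> \<bar>G' s\<bar> \<le> iterlog_rate m \<epsilon> (G s) / (4 * (A + 1))"
    and x: "x \<in> open_cube x\<^sub>0" and t: "0 < t"
  shows "(\<Sum>i\<in>UNIV. \<Sum>j\<in>UNIV. a i j x * cube_barrier_hess G'' x\<^sub>0 i j x)
    + (\<Sum>i\<in>UNIV. b i x * cube_barrier_grad G' x\<^sub>0 i x) + f x (cube_barrier G x\<^sub>0 x t) < G' t"
proof -
  define K where "K = 4 * (A + 1)"
  have K: "0 < K" "A / K \<le> 1 / 4" unfolding K_def using A by (simp_all add: field_simps)
  define s\<^sub>1 where "s\<^sub>1 i = 1 - (x$i - x\<^sub>0$i)" for i
  define s\<^sub>2 where "s\<^sub>2 i = 1 + (x$i - x\<^sub>0$i)" for i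
  have s: "0 < s\<^sub>1 i" "s\<^sub>1 i \<le> 2" "0 < s\<^sub>2 i" "s\<^sub>2 i \<le> 2" for i
    unfolding s\<^sub>1_def s\<^sub>2_def using open_cube_face_distances[OF x] by auto
  define D where "D = iterlog_rate m \<epsilon>"
  have D_pos: "0 < D (G s)" if "0 < s" for s unfolding D_def using G[OF that] by (simp add: iterlog_rate_pos)
  have face: "a i i x * (G'' (s\<^sub>1 i) + G'' (s\<^sub>2 i)) + b i x * (- G' (s\<^sub>1 i) + G' (s\<^sub>2 i))
      \<le> (D (G (s\<^sub>1 i)) + D (G (s\<^sub>2 i))) / 4" for i
  proof -
    have "a i i x * (G'' (s\<^sub>1 i) + G'' (s\<^sub>2 i)) + b i x * (- G' (s\<^sub>1 i) + G' (s\<^sub>2 i))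
        \<le> A * (\<bar>G'' (s\<^sub>1 i) + G'' (s\<^sub>2 i)\<bar> + \<bar>- G' (s\<^sub>1 i) + G' (s\<^sub>2 i)\<bar>)"
      using mult_le_bound_mult_abs[OF a[of i i], of "G'' (s\<^sub>1 i) + G'' (s\<^sub>2 i)"]
        mult_le_bound_mult_abs[OF b[of i], of "- G' (s\<^sub>1 i) + G' (s\<^sub>2 i)"]
      by (simp add: distrib_left)
    also have "\<dots> \<le> A * ((\<bar>G' (s\<^sub>1 i)\<bar> + \<bar>G'' (s\<^sub>1 i)\<bar>) + (\<bar>G' (s\<^sub>2 i)\<bar> + \<bar>G'' (s\<^sub>2 i)\<bar>))"
      using A by (intro mult_left_mono) linarith+
    also have "\<dots> \<le> A * (D (G (s\<^sub>1 i)) / K + D (G (s\<^sub>2 i)) / K)"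
      using G_small s[of i] A unfolding D_def K_def by (intro mult_left_mono add_mono) auto
    also have "\<dots> = (A / K) * (D (G (s\<^sub>1 i)) + D (G (s\<^sub>2 i)))" by (simp add: add_divide_distrib algebra_simps)
    also have "\<dots> \<le> (1 / 4) * (D (G (s\<^sub>1 i)) + D (G (s\<^sub>2 i)))"
      using K D_pos s[of i] by (intro mult_right_mono) (auto intro: add_nonneg_nonneg less_imp_le)
    finally show ?thesis by simp
  qed
  have "(\<Sum>i\<in>UNIV. \<Sum>j\<in>UNIV. a i j x * cube_barrier_hess G'' x\<^sub>0 i j x)
      + (\<Sum>i\<in>UNIV. b i x * cube_barrier_grad G' x\<^sub>0 i x)
      = (\<Sum>i\<in>UNIV. a i i x * (G'' (s\<^sub>1 i) + G'' (s\<^sub>2 i)) + b i x * (- G' (s\<^sub>1 i) + G' (s\<^sub>2 i)))"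
    unfolding cube_barrier_hess_def cube_barrier_grad_def s\<^sub>1_def s\<^sub>2_def
    by (simp add: sum.distrib if_distrib cong: if_cong)
  also have "\<dots> \<le> (\<Sum>i\<in>UNIV. D (G (s\<^sub>1 i)) + D (G (s\<^sub>2 i))) / 4"
    using sum_mono[OF face] by (simp add: sum_divide_distrib)
  finally have ops: "(\<Sum>i\<in>UNIV. \<Sum>j\<in>UNIV. a i j x * cube_barrier_hess G'' x\<^sub>0 i j x)
      + (\<Sum>i\<in>UNIV. b i x * cube_barrier_grad G' x\<^sub>0 i x) \<le> (\<Sum>i\<in>UNIV. D (G (s\<^sub>1 i)) + D (G (s\<^sub>2 i))) / 4" .
  have W: "cube_barrier G x\<^sub>0 x t = G t + (\<Sum>i\<in>UNIV. G (s\<^sub>1 i) + G (s\<^sub>2 i))"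
    unfolding cube_barrier_def s\<^sub>1_def s\<^sub>2_def by simp
  have super: "D (G t) + (\<Sum>i\<in>UNIV. D (G (s\<^sub>1 i)) + D (G (s\<^sub>2 i))) \<le> D (cube_barrier G x\<^sub>0 x t)"
    unfolding W D_def by (rule iterlog_rate_superadditive[OF \<epsilon>]) (use G t s in auto)
  have "0 \<le> (\<Sum>i\<in>UNIV. G (s\<^sub>1 i) + G (s\<^sub>2 i))"
    using G s iter_exp_1_ge_1[of "m+1"] by (intro sum_nonneg add_nonneg_nonneg) (meson less_imp_le order_trans zero_le_one)+
  then have "U \<le> cube_barrier G x\<^sub>0 x t" unfolding W using G[OF t] by linarith
  then have fW: "f x (cube_barrier G x\<^sub>0 x t) \<le> - D (cube_barrier G x\<^sub>0 x t)" unfolding D_def by (rule f)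
  have "\<bar>G' t\<bar> \<le> D (G t) / K" using G'[OF t] unfolding D_def K_def .
  also have "\<dots> \<le> D (G t) / 4" using D_pos[OF t] K A unfolding K_def by (intro divide_left_mono) auto
  finally have "- (D (G t) / 4) \<le> G' t" by linarith
  moreover have "0 \<le> (\<Sum>i\<in>UNIV. D (G (s\<^sub>1 i)) + D (G (s\<^sub>2 i)))"
    using D_pos s by (intro sum_nonneg add_nonneg_nonneg) (auto intro: less_imp_le)
  ultimately show ?thesis using ops fW super D_pos[OF t] by linarith
qed

lemma cube_barrier_ge:
  assumes G: "\<And>s. 0 < s \<Longrightarrow> 0 \<le> G s" and x: "x \<in> open_cube x\<^sub>0" and t: "0 < t"
  shows "G t \<le> cube_barrier G x\<^sub>0 x t"
    and "G (1 - (x$i - x\<^sub>0$i)) \<le> cube_barrier G x\<^sub>0 x t"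
    and "G (1 + (x$i - x\<^sub>0$i)) \<le> cube_barrier G x\<^sub>0 x t"
proof -
  have faces: "0 \<le> G (1 - (x$k - x\<^sub>0$k)) + G (1 + (x$k - x\<^sub>0$k))" for k
    using G open_cube_face_distances[OF x, of k] by (simp add: add_nonneg_nonneg)
  have "G (1 - (x$i - x\<^sub>0$i)) + G (1 + (x$i - x\<^sub>0$i))
      \<le> (\<Sum>k\<in>UNIV. G (1 - (x$k - x\<^sub>0$k)) + G (1 + (x$k - x\<^sub>0$k)))"
    by (rule member_le_sum) (simp_all add: faces)
  moreover have "0 \<le> G (1 - (x$i - x\<^sub>0$i))" "0 \<le> G (1 + (x$i - x\<^sub>0$i))" "0 \<le> G t"
    using G open_cube_face_distances[OF x, of i] t by auto
  moreover have "0 \<le> (\<Sum>k\<in>UNIV. G (1 - (x$k - x\<^sub>0$k)) + G (1 + (x$k - x\<^sub>0$k)))"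
    by (rule sum_nonneg) (simp add: faces)
  ultimately show "G t \<le> cube_barrier G x\<^sub>0 x t"
    "G (1 - (x$i - x\<^sub>0$i)) \<le> cube_barrier G x\<^sub>0 x t" "G (1 + (x$i - x\<^sub>0$i)) \<le> cube_barrier G x\<^sub>0 x t"
    unfolding cube_barrier_def by linarith+
qed

lemma cube_barrier_blowup:
  assumes G_nonneg: "\<And>s. 0 < s \<Longrightarrow> 0 \<le> G s" and G_blowup: "\<And>s. 0 < s \<Longrightarrow> s \<le> 1 \<Longrightarrow> 1 / s \<le> G s"
  shows "\<forall>V. \<exists>\<delta>>0. \<forall>x\<in>open_cube x\<^sub>0. \<forall>t>0.
    (t \<le> \<delta> \<or> (\<exists>i. 1 - \<bar>x$i - x\<^sub>0$i\<bar> \<le> \<delta>)) \<longrightarrow> V < cube_barrier G x\<^sub>0 x t"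
proof
  fix V :: real
  define \<delta> where "\<delta> = min 1 (1 / (\<bar>V\<bar> + 1))"
  have \<delta>: "0 < \<delta>" "\<delta> \<le> 1" unfolding \<delta>_def by auto
  have large: "V < G s" if "0 < s" "s \<le> \<delta>" for s
  proof -
    have "\<bar>V\<bar> + 1 \<le> 1 / \<delta>" unfolding \<delta>_def by (cases "1 \<le> 1 / (\<bar>V\<bar> + 1)") (auto simp: field_simps)
    also have "\<dots> \<le> 1 / s" using that by (simp add: frac_le)
    also have "\<dots> \<le> G s" using G_blowup that \<delta> by auto
    finally show ?thesis by linarith
  qed
  show "\<exists>\<delta>>0. \<forall>x\<in>open_cube x\<^sub>0. \<forall>t>0. (t \<le> \<delta> \<or> (\<exists>i. 1 - \<bar>x$i - x\<^sub>0$i\<bar> \<le> \<delta>)) \<longrightarrow>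
      V < cube_barrier G x\<^sub>0 x t"
  proof (intro exI[of _ \<delta>] conjI ballI allI impI \<delta>(1))
    fix x t assume x: "x \<in> open_cube x\<^sub>0" and t: "0 < t"
      and near: "t \<le> \<delta> \<or> (\<exists>i. 1 - \<bar>x$i - x\<^sub>0$i\<bar> \<le> \<delta>)"
    note bounds = cube_barrier_ge[where G = G, OF G_nonneg x t]
    show "V < cube_barrier G x\<^sub>0 x t"
    proof (cases "t \<le> \<delta>")
      case True
      then show ?thesis using large[OF t] bounds(1) by linarith
    next
      case False
      then obtain i where i: "1 - \<bar>x$i - x\<^sub>0$i\<bar> \<le> \<delta>" using near by blast
      have pos: "0 < 1 - (x$i - x\<^sub>0$i)" "0 < 1 + (x$i - x\<^sub>0$i)" using open_cube_face_distances[OF x] by auto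
      show ?thesis
      proof (cases "0 \<le> x$i - x\<^sub>0$i")
        case True
        then have "V < G (1 - (x$i - x\<^sub>0$i))" using i pos by (intro large) auto
        then show ?thesis using bounds(2)[of i] by linarith
      next
        case False
        then have "V < G (1 + (x$i - x\<^sub>0$i))" using i pos by (intro large) auto
        then show ?thesis using bounds(3)[of i] by linarith
      qed
    qed
  qed
qed

lemma cond_F2_absorption:
  assumes "cond_F2 f" "0 < R"
  obtains \<epsilon> m U where "0 < \<epsilon>" "iter_exp (m+1) 1 \<le> U" "\<And>u. U \<le> u \<Longrightarrow> F_sup f R u \<le> - iterlog_rate m \<epsilon> u"
proof -
  obtain m \<epsilon> where \<epsilon>: "0 < \<epsilon>" and lim: "filterlim (\<lambda>u. F_sup f R u / iterlog_rate m \<epsilon> u) at_bot at_top"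
    using assms unfolding cond_F2_def iterlog_rate_def by blast
  have "\<forall>\<^sub>F u in at_top. F_sup f R u / iterlog_rate m \<epsilon> u \<le> -1"
    using lim unfolding filterlim_at_bot by blast
  then obtain N where N: "\<And>u. N \<le> u \<Longrightarrow> F_sup f R u / iterlog_rate m \<epsilon> u \<le> -1"
    unfolding eventually_at_top_linorder by blast
  define U where "U = max N (iter_exp (m+1) 1)"
  have "F_sup f R u \<le> - iterlog_rate m \<epsilon> u" if "U \<le> u" for u
  proof -
    have "0 < iterlog_rate m \<epsilon> u" by (rule iterlog_rate_pos) (use that in \<open>simp add: U_def\<close>)
    moreover have "F_sup f R u / iterlog_rate m \<epsilon> u \<le> -1" using N that by (simp add: U_def)
    ultimately show ?thesis by (simp add: divide_le_eq)
  qed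
  moreover have "iter_exp (m+1) 1 \<le> U" by (simp add: U_def)
  ultimately show ?thesis using that \<epsilon> by blast
qed

lemma le_F_sup:
  assumes lip: "loc_lipschitz_xu f" and x: "x \<in> cball 0 R" and u: "0 \<le> u"
  shows "f x u \<le> F_sup f R u"
proof -
  define R' where "R' = max R u + 1"
  have "0 < R'" using u unfolding R'_def by linarith
  then obtain C where C: "\<forall>x\<in>cball 0 R'. \<forall>y\<in>cball 0 R'. \<forall>u\<in>{0..R'}. \<forall>v\<in>{0..R'}.
      \<bar>f x u - f y v\<bar> \<le> C * (dist x y + \<bar>u - v\<bar>)"
    using lip unfolding loc_lipschitz_xu_def by blast
  have "f y u \<le> f 0 u + \<bar>C\<bar> * R'" if "y \<in> cball 0 R" for y
  proof -
    have "y \<in> cball 0 R'" "(0::real^'a) \<in> cball 0 R'" "u \<in> {0..R'}"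
      using that u unfolding R'_def by auto
    then have "\<bar>f y u - f 0 u\<bar> \<le> C * (dist y 0 + \<bar>u - u\<bar>)" using C by blast
    then have "\<bar>f y u - f 0 u\<bar> \<le> C * dist y 0" by simp
    also have "\<dots> \<le> \<bar>C\<bar> * R'"
      using that unfolding R'_def by (intro mult_mono) (auto simp: dist_commute)
    finally show ?thesis by linarith
  qed
  then have "bdd_above ((\<lambda>y. f y u) ` cball 0 R)" by (intro bdd_aboveI2) blast
  then show ?thesis unfolding F_sup_def by (rule cSUP_upper[OF x])
qed

lemma loc_hoelder_bounded:
  assumes "loc_hoelder \<alpha> h" "0 < \<alpha>" "0 < R"
  obtains c where "\<And>x. x \<in> cball 0 R \<Longrightarrow> \<bar>h x\<bar> \<le> c"
proof -
  obtain C where C: "\<forall>x\<in>cball 0 R. \<forall>y\<in>cball 0 R. \<bar>h x - h y\<bar> \<le> C * dist x y powr \<alpha>"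
    using assms unfolding loc_hoelder_def by blast
  have "\<bar>h x\<bar> \<le> \<bar>h 0\<bar> + \<bar>C\<bar> * R powr \<alpha>" if "x \<in> cball 0 R" for x
  proof -
    have "(0::real^'a) \<in> cball 0 R" using assms(3) by simp
    then have "\<bar>h x - h 0\<bar> \<le> C * dist x 0 powr \<alpha>" using C that by blast
    also have "\<dots> \<le> \<bar>C\<bar> * R powr \<alpha>"
      using that assms by (intro mult_mono powr_mono2) (auto simp: dist_commute)
    finally show ?thesis by linarith
  qed
  then show ?thesis using that by blast
qed

lemma loc_hoelder_coefficients_bounded:
  fixes a :: "'n::finite \<Rightarrow> 'n \<Rightarrow> real^'n \<Rightarrow> real" and b :: "'n \<Rightarrow> real^'n \<Rightarrow> real"
  assumes "0 < \<alpha>" "0 < R" "\<And>i j. loc_hoelder \<alpha> (a i j)" "\<And>i. loc_hoelder \<alpha> (b i)"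
  obtains A where "0 \<le> A" "\<And>x i j. x \<in> cball 0 R \<Longrightarrow> \<bar>a i j x\<bar> \<le> A"
    "\<And>x i. x \<in> cball 0 R \<Longrightarrow> \<bar>b i x\<bar> \<le> A"
proof -
  have "\<exists>c. \<forall>x\<in>cball 0 R. \<bar>a i j x\<bar> \<le> c" "\<exists>c. \<forall>x\<in>cball 0 R. \<bar>b i x\<bar> \<le> c" for i j
    using loc_hoelder_bounded[OF assms(3) assms(1,2)] loc_hoelder_bounded[OF assms(4) assms(1,2)]
    by metis+
  then obtain c\<^sub>a c\<^sub>b where c\<^sub>a: "\<And>x i j. x \<in> cball 0 R \<Longrightarrow> \<bar>a i j x\<bar> \<le> c\<^sub>a i j"
    and c\<^sub>b: "\<And>x i. x \<in> cball 0 R \<Longrightarrow> \<bar>b i x\<bar> \<le> c\<^sub>b i"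
    by metis
  define A where "A = (\<Sum>i\<in>UNIV. \<Sum>j\<in>UNIV. \<bar>c\<^sub>a i j\<bar>) + (\<Sum>i\<in>UNIV. \<bar>c\<^sub>b i\<bar>)"
  have sums: "0 \<le> (\<Sum>i\<in>UNIV. \<Sum>j\<in>UNIV. \<bar>c\<^sub>a i j\<bar>)" "0 \<le> (\<Sum>i\<in>UNIV. \<bar>c\<^sub>b i\<bar>)"
    by (simp_all add: sum_nonneg)
  have "\<bar>c\<^sub>a i j\<bar> \<le> (\<Sum>j\<in>UNIV. \<bar>c\<^sub>a i j\<bar>)" "(\<Sum>j\<in>UNIV. \<bar>c\<^sub>a i j\<bar>) \<le> (\<Sum>i\<in>UNIV. \<Sum>j\<in>UNIV. \<bar>c\<^sub>a i j\<bar>)"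
    "\<bar>c\<^sub>b i\<bar> \<le> (\<Sum>i\<in>UNIV. \<bar>c\<^sub>b i\<bar>)" for i j
    by (intro member_le_sum; simp add: sum_nonneg)+
  note le = this
  have A: "c\<^sub>a i j \<le> A" "c\<^sub>b i \<le> A" for i j
    unfolding A_def using sums le(1)[of i j] le(2)[of i] le(3)[of i]
      abs_ge_self[of "c\<^sub>a i j"] abs_ge_self[of "c\<^sub>b i"] by linarith+
  show ?thesis
  proof (rule that)
    show "0 \<le> A" using sums unfolding A_def by simp
    show "\<bar>a i j x\<bar> \<le> A" if "x \<in> cball 0 R" for x i j using c\<^sub>a[OF that, of i j] A(1)[of i j] by linarith
    show "\<bar>b i x\<bar> \<le> A" if "x \<in> cball 0 R" for x i using c\<^sub>b[OF that, of i] A(2)[of i] by linarith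
  qed
qed

lemma classical_solutions_locally_bounded:
  fixes a :: "'n::finite \<Rightarrow> 'n \<Rightarrow> real^'n \<Rightarrow> real" and b :: "'n \<Rightarrow> real^'n \<Rightarrow> real"
    and f :: "real^'n \<Rightarrow> real \<Rightarrow> real"
  assumes \<alpha>: "0 < \<alpha>" and a: "\<And>i j. loc_hoelder \<alpha> (a i j)" and b: "\<And>i. loc_hoelder \<alpha> (b i)"
    and ell: "elliptic_pointwise a" and lip: "loc_lipschitz_xu f" and F2: "cond_F2 f" and R: "0 < R"
  obtains B where "continuous_on {0<..} B"
    "\<And>g u x t. classical_solution a b f g u \<Longrightarrow> norm x + real CARD('n) \<le> R \<Longrightarrow> 0 < t \<Longrightarrow> u x t \<le> B t"
proof -
  obtain \<epsilon> m U where \<epsilon>: "0 < \<epsilon>" and U: "iter_exp (m+1) 1 \<le> U"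
    and F: "\<And>u. U \<le> u \<Longrightarrow> F_sup f R u \<le> - iterlog_rate m \<epsilon> u"
    by (rule cond_F2_absorption[OF F2 R]) blast
  obtain A where A: "0 \<le> A" "\<And>x i j. x \<in> cball 0 R \<Longrightarrow> \<bar>a i j x\<bar> \<le> A"
    "\<And>x i. x \<in> cball 0 R \<Longrightarrow> \<bar>b i x\<bar> \<le> A"
    by (rule loc_hoelder_coefficients_bounded[where a = a and b = b, OF \<alpha> R a b]) blast
  have "0 < 4 * (A + 1)" using A(1) by simp
  then obtain G G' G'' where derivs: "\<And>s. 0 < s \<Longrightarrow> (G has_real_derivative G' s) (at s)"
    "\<And>s. 0 < s \<Longrightarrow> (G' has_real_derivative G'' s) (at s)" "\<And>s. 0 < s \<Longrightarrow> isCont G'' s"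
    and G_ge: "\<And>s. 0 < s \<Longrightarrow> U \<le> G s \<and> iter_exp (m+1) 1 \<le> G s"
    and G_small: "\<And>s. 0 < s \<Longrightarrow> s \<le> 2 \<Longrightarrow> \<bar>G' s\<bar> + \<bar>G'' s\<bar> \<le> iterlog_rate m \<epsilon> (G s) / (4 * (A + 1))"
    and G': "\<And>s. 0 < s \<Longrightarrow> \<bar>G' s\<bar> \<le> iterlog_rate m \<epsilon> (G s) / (4 * (A + 1))"
    and G_blowup: "\<And>s. 0 < s \<Longrightarrow> s \<le> 1 \<Longrightarrow> 1 / s \<le> G s"
    by (rule barrier_profile_exists[OF \<epsilon>]) blast
  have G_nonneg: "0 \<le> G s" if "0 < s" for s
    using G_ge[OF that] iter_exp_1_ge_1[of "m+1"] by linarith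
  define B where "B t = G t + 2 * real CARD('n) * G 1" for t
  have "continuous_on {0<..} G" using derivs(1) DERIV_isCont by (blast intro: continuous_at_imp_continuous_on)
  then have "continuous_on {0<..} B" unfolding B_def[abs_def] by (intro continuous_intros)
  moreover have "u x t \<le> B t"
    if sol: "classical_solution a b f g u" and x: "norm x + real CARD('n) \<le> R" and t: "0 < t" for g u x t
  proof -
    have in_ball: "y \<in> cball 0 R" if "y \<in> open_cube x" for y
      using open_cube_subset_cball[of x] that x norm_triangle_ineq2[of y x]
      by (auto simp: dist_norm norm_minus_commute)
    note W = cube_barrier_derivatives[where G = G and G' = G' and G'' = G'' and x\<^sub>0 = x, OF derivs]
    have "u x t \<le> cube_barrier G x x t"
    proof (rule comparison_on_cube[where W\<^sub>t = "\<lambda>y s. G' s" and DW = "\<lambda>i y s. cube_barrier_grad G' x i y"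
          and D2W = "\<lambda>i j y s. cube_barrier_hess G'' x i j y", OF sol ell W(1,2,3,4,5,6)])
      fix y and s :: real assume y: "y \<in> open_cube x" and s: "0 < s"
      have f: "f y v \<le> - iterlog_rate m \<epsilon> v" if "U \<le> v" for v
        using le_F_sup[OF lip in_ball[OF y], of v] F[OF that] U iter_exp_1_ge_1[of "m+1"] that by linarith
      show "(\<Sum>i\<in>UNIV. \<Sum>j\<in>UNIV. a i j y * cube_barrier_hess G'' x i j y)
          + (\<Sum>i\<in>UNIV. b i y * cube_barrier_grad G' x i y) + f y (cube_barrier G x y s) < G' s"
        by (rule cube_barrier_supersolution[where a = a and b = b and f = f and G = G and G' = G'
              and G'' = G'', OF \<epsilon> A(1) A(2)[OF in_ball[OF y]] A(3)[OF in_ball[OF y]] f G_ge G_small G' y s])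
    next
      show "\<forall>V. \<exists>\<delta>>0. \<forall>y\<in>open_cube x. \<forall>s>0. (s \<le> \<delta> \<or> (\<exists>i. 1 - \<bar>y$i - x$i\<bar> \<le> \<delta>)) \<longrightarrow>
          V < cube_barrier G x y s"
        by (rule cube_barrier_blowup[OF G_nonneg G_blowup])
    qed (simp_all add: center_in_open_cube t)
    also have "cube_barrier G x x t = B t" unfolding cube_barrier_def B_def by simp
    finally show ?thesis .
  qed
  ultimately show ?thesis using that by blast
qed

text \<open>Bounds \<open>B k\<close> valid for \<open>\<parallel>x\<parallel> \<le> k + 1\<close> are glued continuously along the shells
  \<open>k - 1 \<le> \<parallel>x\<parallel> \<le> k\<close> by piecewise linear cut-offs in \<open>\<parallel>x\<parallel>\<close>.\<close>

lemma continuous_majorant_of_bounds_on_shells: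
  fixes B :: "nat \<Rightarrow> real \<Rightarrow> real"
  assumes B: "\<And>k. continuous_on {0<..} (B k)"
  obtains M :: "'a::real_normed_vector \<Rightarrow> real \<Rightarrow> real"
  where "continuous_on (UNIV \<times> {0<..}) (\<lambda>(x, t). M x t)" "\<And>x t. B (nat \<lfloor>norm x\<rfloor>) t \<le> M x t"
proof -
  define \<phi> where "\<phi> k \<rho> = min 1 (max 0 (\<rho> - real k + 1))" for k :: nat and \<rho> :: real
  define P where "P L x t = (\<Sum>k < L + 3. max 0 (B k t) * \<phi> k (norm x))" for L :: nat and x :: 'a and t
  define M where "M x t = P (nat \<lfloor>norm x\<rfloor>) x t" for x t
  have "B (nat \<lfloor>norm x\<rfloor>) t \<le> M x t" for x t
  proof -
    define k where "k = nat \<lfloor>norm x\<rfloor>"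
    have "real k = of_int \<lfloor>norm x\<rfloor>" unfolding k_def by simp
    then have "real k \<le> norm x" by linarith
    then have "B k t \<le> max 0 (B k t) * \<phi> k (norm x)" unfolding \<phi>_def by simp
    also have "\<dots> \<le> M x t" unfolding M_def P_def k_def[symmetric]
      by (rule member_le_sum[of k "{..<k + 3}" "\<lambda>k. max 0 (B k t) * \<phi> k (norm x)"])
        (auto simp: \<phi>_def)
    finally show ?thesis unfolding k_def .
  qed
  moreover have "continuous_on (UNIV \<times> {0<..}) (\<lambda>(x, t). M x t)"
  proof -
    have P: "continuous_on (UNIV \<times> {0<..}) (\<lambda>(x, t). P L x t)" for L
    proof -
      have Bk: "continuous_on (UNIV \<times> {0<..}) (\<lambda>p. B k (snd p))" for k
        by (rule continuous_on_compose2[OF B[of k]]) (auto intro!: continuous_intros)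
      have "continuous_on (UNIV \<times> {0<..}) (\<lambda>p. \<Sum>k < L + 3. max 0 (B k (snd p)) * \<phi> k (norm (fst p)))"
        unfolding \<phi>_def by (intro Bk continuous_intros)
      then show ?thesis unfolding P_def by (simp add: case_prod_beta)
    qed
    have local: "M x t = P L x t" if "norm x < real L" for x t L
    proof -
      define k where "k = nat \<lfloor>norm x\<rfloor>"
      have "real k = of_int \<lfloor>norm x\<rfloor>" unfolding k_def by simp
      then have k: "real k \<le> norm x" "real k < real L" using that by linarith+
      have "P k x t = P L x t" unfolding P_def
      proof (rule sum.mono_neutral_left)
        show "{..<k + 3} \<subseteq> {..<L + 3}" using k by auto
        show "\<forall>i\<in>{..<L + 3} - {..<k + 3}. max 0 (B i t) * \<phi> i (norm x) = 0"
        proof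
          fix i assume "i \<in> {..<L + 3} - {..<k + 3}"
          then have "real k + 3 \<le> real i" by auto
          then show "max 0 (B i t) * \<phi> i (norm x) = 0"
            using \<open>real k = of_int \<lfloor>norm x\<rfloor>\<close> unfolding \<phi>_def by simp linarith
        qed
      qed simp
      then show ?thesis unfolding M_def k_def .
    qed
    have "continuous_on (\<Union>L. ball 0 (real L) \<times> {0<..}) (\<lambda>(x, t). M x t)"
    proof (rule continuous_on_open_Union)
      fix S assume "S \<in> range (\<lambda>L. ball (0::'a) (real L) \<times> ({0<..} :: real set))"
      then obtain L where S: "S = ball 0 (real L) \<times> {0<..}" by blast
      show "open S" unfolding S by (intro open_Times open_ball open_greaterThan)
      have "continuous_on S (\<lambda>(x, t). P L x t)" by (rule continuous_on_subset[OF P]) (auto simp: S)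
      moreover have "(\<lambda>(x, t). M x t) p = (\<lambda>(x, t). P L x t) p" if "p \<in> S" for p
        using that local unfolding S by auto
      ultimately show "continuous_on S (\<lambda>(x, t). M x t)" using continuous_on_cong by blast
    qed
    moreover have "(\<Union>L. ball (0::'a) (real L) \<times> ({0<..} :: real set)) = UNIV \<times> {0<..}"
      using reals_Archimedean2 by (auto simp: mem_Times_iff) blast
    ultimately show ?thesis by simp
  qed
  ultimately show ?thesis using that by blast
qed

theorem theorem1:
  fixes a :: "'n::finite \<Rightarrow> 'n \<Rightarrow> real^'n \<Rightarrow> real"
    and b :: "'n \<Rightarrow> real^'n \<Rightarrow> real"
    and f :: "real^'n \<Rightarrow> real \<Rightarrow> real"
    and \<alpha> :: real
  assumes "0 < \<alpha>" and "\<alpha> < 1"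
    and "\<forall>i j. loc_hoelder \<alpha> (a i j)"
    and "\<forall>i. loc_hoelder \<alpha> (b i)"
    and "elliptic_pointwise a"
    and "loc_lipschitz_xu f"
    and "cond_F1 f"
    and "cond_F2 f"
  shows "\<exists>M :: real^'n \<Rightarrow> real \<Rightarrow> real.
           continuous_on (UNIV \<times> {0<..}) (\<lambda>(x,t). M x t) \<and>
           (\<forall>g u. continuous_on UNIV g \<longrightarrow> (\<forall>x. g x \<ge> 0) \<longrightarrow>
              classical_solution a b f g u \<longrightarrow>
              (\<forall>x. \<forall>t>0. u x t \<le> M x t))"
proof -
  have "\<exists>B. continuous_on {0<..} B \<and> (\<forall>g u x t. classical_solution a b f g u \<longrightarrow>
      norm x \<le> real k + 1 \<longrightarrow> 0 < t \<longrightarrow> u x t \<le> B t)" for k :: nat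
  proof -
    have "(0::real) < real k + 1 + real CARD('n)" by simp
    then obtain B where "continuous_on {0<..} B" and "\<And>g u x t. classical_solution a b f g u \<Longrightarrow>
        norm x + real CARD('n) \<le> real k + 1 + real CARD('n) \<Longrightarrow> 0 < t \<Longrightarrow> u x t \<le> B t"
      by (rule classical_solutions_locally_bounded[where a = a and b = b and f = f,
            OF assms(1) assms(3)[rule_format] assms(4)[rule_format] assms(5,6,8)]) blast
    then show ?thesis by auto
  qed
  then obtain B where B_cont: "\<And>k. continuous_on {0<..} (B k)"
    and bound: "\<And>k g u x t. classical_solution a b f g u \<Longrightarrow> norm x \<le> real k + 1 \<Longrightarrow> 0 < t \<Longrightarrow> u x t \<le> B k t"
    by metis
  obtain M :: "real^'n \<Rightarrow> real \<Rightarrow> real" where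
    "continuous_on (UNIV \<times> {0<..}) (\<lambda>(x, t). M x t)" "\<And>x t. B (nat \<lfloor>norm x\<rfloor>) t \<le> M x t"
    by (rule continuous_majorant_of_bounds_on_shells[where B = B, OF B_cont]) blast
  moreover have "u x t \<le> B (nat \<lfloor>norm x\<rfloor>) t" if "classical_solution a b f g u" "0 < t" for g u x t
  proof (rule bound[OF that(1) _ that(2)])
    have "real (nat \<lfloor>norm x\<rfloor>) = of_int \<lfloor>norm x\<rfloor>" by simp
    then show "norm x \<le> real (nat \<lfloor>norm x\<rfloor>) + 1" by linarith
  qed
  ultimately show ?thesis by (meson order_trans)
qed

end
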